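(* Let $m\ge1$, $m'=\lceil(m+1)/2\rceil$ and $\alpha,\beta\in P_{de,C,m}^\vee$. Then \[ |S(\alpha,\beta)|^{2^{d-2}}\le(\#P_{e,C,m}^{2(n+1)})^{2^{d-2}}(\#P_{e,C,m-m'}^{n+1})^{-(d-1)}\min\left\{N^{(m-m')}(\alpha),\ (\#P_{e,C,m'-1}^{n+1})^{-(d-1)}N^{(m)}(\beta)\right\}. \]
   Context: Let $\mathbb{F}_q$ be a finite field, $\psi$ a non-trivial additive character of $\mathbb{F}_q$, and $\psi_m(a_0+\dots+a_mt^m)=\prod_i\psi(a_i)$. Let $C$ be a smooth projective geometrically integral curve of genus $g$ over $\mathbb{F}_q$, $L$ a line bundle of degree $e\ge2g-1$, and $F=\sum_{j_1,\dots,j_d}a_{j_1\dots j_d}x_{j_1}\cdots x_{j_d}\in\mathbb{F}_q[x_0,\dots,x_n]$ a form of degree $d\ge2$ with symmetric coefficients. $P_{re,C}=H^0(C,L^{\otimes r})$, $P_{re,C,k}=P_{re,C}\otimes\mathbb{F}_q[t]/t^{k+1}$ (products are cup products). $P_{de,C,m}^\vee=P_{de,C}^\vee\otimes\mathbb{F}_q[t]/t^{m+1}$, with $\alpha(y)=\sum_l(\sum_{i+j=l}\alpha_i(y_j))t^l$ for $\alpha=\sum\alpha_it^i$, $y=\sum y_jt^j$. $\vec x\in P_{e,C,m}^{n+1}$ is globally generating if the components of $\vec x\bmod t$ generate $L$. $S(\alpha,\beta)=\sum\psi_m\big(\alpha(F(\vec x_0))+\beta(\vec x_1\cdot\nabla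 F(\vec x_0))\big)$ over $\vec x_0,\vec x_1\in P_{e,C,m}^{n+1}$ with $\vec x_0$ globally generating. $\Psi_j(\vec x^{(1)},\dots,\vec x^{(d-1)})=d!\sum_{j_1,\dots,j_{d-1}}a_{j_1,\dots,j_{d-1},j}x^{(1)}_{j_1}\cdots x^{(d-1)}_{j_{d-1}}$, and for $\gamma\in P_{de,C,m}^\vee$ and $0\le k\le m$, $N^{(k)}(\gamma)=\#\{(\vec y^{(1)},\dots,\vec y^{(d-1)})\in(P_{e,C,k}^{n+1})^{d-1}:\gamma(\Psi_i(\vec y^{(1)},\dots,\vec y^{(d-1)})y)\equiv 0\bmod t^{k+1}\ \forall\,0\le i\le n,\ y\in P_{e,C,k}\}$. *)

theory Defs
  imports Complex_Main "HOL-Computational_Algebra.Polynomial"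
begin

section \<open>The curve C, encoded by its function field K over F_q\<close>

text \<open>F_q is a finite field type 'k, embedded into the function field 'K of C via emb.
 A smooth projective geometrically integral curve over the perfect field F_q is the same
 as a function field of one variable K/F_q with F_q algebraically closed in K.\<close>

definition const_emb :: "('k::field \<Rightarrow> 'K::field) \<Rightarrow> bool" where
  "const_emb emb \<longleftrightarrow> emb 0 = 0 \<and> emb 1 = 1 \<and> (\<forall>a b. emb (a + b) = emb a + emb b)
     \<and> (\<forall>a b. emb (a * b) = emb a * emb b)"

definition algebraic_over :: "('k::field \<Rightarrow> 'K::field) \<Rightarrow> 'K \<Rightarrow> bool" where
  "algebraic_over emb f \<longleftrightarrow> (\<exists>p. p \<noteq> 0 \<and> poly (map_poly emb p) f = 0)"

definition rat_fun_field :: "('k::field \<Rightarrow> 'K::field) \<Rightarrow> 'K \<Rightarrow> 'K set" where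
  "rat_fun_field emb x = {f. \<exists>p q. poly (map_poly emb q) x \<noteq> 0 \<and>
      f = poly (map_poly emb p) x / poly (map_poly emb q) x}"

definition function_field :: "('k::field \<Rightarrow> 'K::field) \<Rightarrow> bool" where
  "function_field emb \<longleftrightarrow> const_emb emb \<and>
     (\<exists>x. \<not> algebraic_over emb x \<and>
        (\<exists>B. finite B \<and> (\<forall>f. \<exists>c. (\<forall>b\<in>B. c b \<in> rat_fun_field emb x) \<and> f = (\<Sum>b\<in>B. c b * b)))) \<and>
     (\<forall>f. algebraic_over emb f \<longrightarrow> f \<in> range emb)"

text \<open>Closed points of C = normalized discrete valuations of K trivial on F_q
  (value at 0 normalised to 0).\<close>

definition place :: "('k::field \<Rightarrow> 'K::field) \<Rightarrow> ('K \<Rightarrow> int) \<Rightarrow> bool" where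
  "place emb v \<longleftrightarrow>
     (\<forall>a b. a \<noteq> 0 \<longrightarrow> b \<noteq> 0 \<longrightarrow> v (a * b) = v a + v b) \<and>
     (\<forall>a b. a \<noteq> 0 \<longrightarrow> b \<noteq> 0 \<longrightarrow> a + b \<noteq> 0 \<longrightarrow> min (v a) (v b) \<le> v (a + b)) \<and>
     (\<forall>c. c \<noteq> 0 \<longrightarrow> v (emb c) = 0) \<and> (\<exists>t. t \<noteq> 0 \<and> v t = 1) \<and> v 0 = 0"

definition val_ring :: "('K::field \<Rightarrow> int) \<Rightarrow> 'K set" where
  "val_ring v = {f. f = 0 \<or> 0 \<le> v f}"

definition residue_card :: "('K::field \<Rightarrow> int) \<Rightarrow> nat" where
  "residue_card v = card (val_ring v // {(f, g). f \<in> val_ring v \<and> g \<in> val_ring v \<and> (f = g \<or> 1 \<le> v (f - g))})"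

definition place_deg :: "('k::{finite,field} \<Rightarrow> 'K::field) \<Rightarrow> ('K \<Rightarrow> int) \<Rightarrow> nat" where
  "place_deg emb v = (THE r. residue_card v = card (UNIV :: 'k set) ^ r)"

definition divisor :: "('k::field \<Rightarrow> 'K::field) \<Rightarrow> (('K \<Rightarrow> int) \<Rightarrow> int) \<Rightarrow> bool" where
  "divisor emb D \<longleftrightarrow> (\<forall>v. \<not> place emb v \<longrightarrow> D v = 0) \<and> finite {v. D v \<noteq> 0}"

definition div_deg :: "('k::{finite,field} \<Rightarrow> 'K::field) \<Rightarrow> (('K \<Rightarrow> int) \<Rightarrow> int) \<Rightarrow> int" where
  "div_deg emb D = (\<Sum>v\<in>{v. D v \<noteq> 0}. D v * int (place_deg emb v))"

definition RR_space :: "('k::field \<Rightarrow> 'K::field) \<Rightarrow> (('K \<Rightarrow> int) \<Rightarrow> int) \<Rightarrow> 'K set" where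
  "RR_space emb D = {f. f = 0 \<or> (\<forall>v. place emb v \<longrightarrow> - D v \<le> v f)}"

definition RR_dim :: "('k::{finite,field} \<Rightarrow> 'K::field) \<Rightarrow> (('K \<Rightarrow> int) \<Rightarrow> int) \<Rightarrow> nat" where
  "RR_dim emb D = (THE r. card (RR_space emb D) = card (UNIV :: 'k set) ^ r)"

definition genus :: "('k::{finite,field} \<Rightarrow> 'K::field) \<Rightarrow> int" where
  "genus emb = Sup {div_deg emb D + 1 - int (RR_dim emb D) | D. divisor emb D}"

definition div_scale :: "nat \<Rightarrow> (('K \<Rightarrow> int) \<Rightarrow> int) \<Rightarrow> (('K \<Rightarrow> int) \<Rightarrow> int)" where
  "div_scale r D = (\<lambda>v. int r * D v)"

text \<open>Global generation of L = O(D) by sections x_0(0),...,x_n(0) (constant terms).\<close>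

definition glob_gen :: "('k::field \<Rightarrow> 'K::field) \<Rightarrow> (('K \<Rightarrow> int) \<Rightarrow> int) \<Rightarrow> nat
    \<Rightarrow> (nat \<Rightarrow> nat \<Rightarrow> 'K) \<Rightarrow> bool" where
  "glob_gen emb D n x \<longleftrightarrow> (\<forall>v. place emb v \<longrightarrow> (\<exists>j\<le>n. x j 0 \<noteq> 0 \<and> v (x j 0) = - D v))"

section \<open>Truncated objects V \<otimes> F_q[t]/t^(k+1)\<close>

text \<open>An element is a coefficient sequence y :: nat => 'K (coefficient of t^l).\<close>

definition trunc :: "'K::field set \<Rightarrow> nat \<Rightarrow> (nat \<Rightarrow> 'K) set" where
  "trunc V k = {y. (\<forall>l\<le>k. y l \<in> V) \<and> (\<forall>l>k. y l = 0)}"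

definition tvecs :: "'K::field set \<Rightarrow> nat \<Rightarrow> nat \<Rightarrow> (nat \<Rightarrow> nat \<Rightarrow> 'K) set" where
  "tvecs V k N = {x. (\<forall>i<N. x i \<in> trunc V k) \<and> (\<forall>i\<ge>N. x i = (\<lambda>_. 0))}"

definition tmul :: "nat \<Rightarrow> (nat \<Rightarrow> 'K::field) \<Rightarrow> (nat \<Rightarrow> 'K) \<Rightarrow> nat \<Rightarrow> 'K" where
  "tmul k x y = (\<lambda>l. if l \<le> k then (\<Sum>i\<le>l. x i * y (l - i)) else 0)"

definition tone :: "nat \<Rightarrow> 'K::field" where
  "tone = (\<lambda>l. if l = 0 then 1 else 0)"

definition tprod :: "nat \<Rightarrow> (nat \<Rightarrow> 'K::field) list \<Rightarrow> nat \<Rightarrow> 'K" where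
  "tprod k xs = foldr (tmul k) xs tone"

definition sym_coeffs :: "(nat list \<Rightarrow> 'k) \<Rightarrow> bool" where
  "sym_coeffs a \<longleftrightarrow> (\<forall>js js'. mset js = mset js' \<longrightarrow> a js = a js')"

definition idx :: "nat \<Rightarrow> nat \<Rightarrow> nat list set" where
  "idx n r = {js. length js = r \<and> set js \<subseteq> {..n}}"

definition form_eval :: "('k::field \<Rightarrow> 'K::field) \<Rightarrow> nat \<Rightarrow> (nat list \<Rightarrow> 'k) \<Rightarrow> nat \<Rightarrow> nat
    \<Rightarrow> (nat \<Rightarrow> nat \<Rightarrow> 'K) \<Rightarrow> nat \<Rightarrow> 'K" where
  "form_eval emb k a n d x = (\<lambda>l. \<Sum>js\<in>idx n d. emb (a js) * tprod k (map x js) l)"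

text \<open>Formal partial derivative dF/dx_i, evaluated at x.\<close>

definition partial_eval :: "('k::field \<Rightarrow> 'K::field) \<Rightarrow> nat \<Rightarrow> (nat list \<Rightarrow> 'k) \<Rightarrow> nat \<Rightarrow> nat
    \<Rightarrow> nat \<Rightarrow> (nat \<Rightarrow> nat \<Rightarrow> 'K) \<Rightarrow> nat \<Rightarrow> 'K" where
  "partial_eval emb k a n d i x = (\<lambda>l. \<Sum>js\<in>idx n d. emb (a js) *
      (\<Sum>p<d. if js ! p = i then tprod k (map x (take p js @ drop (Suc p) js)) l else 0))"

definition grad_dot :: "('k::field \<Rightarrow> 'K::field) \<Rightarrow> nat \<Rightarrow> (nat list \<Rightarrow> 'k) \<Rightarrow> nat \<Rightarrow> nat
    \<Rightarrow> (nat \<Rightarrow> nat \<Rightarrow> 'K) \<Rightarrow> (nat \<Rightarrow> nat \<Rightarrow> 'K) \<Rightarrow> nat \<Rightarrow> 'K" where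
  "grad_dot emb k a n d x1 x0 = (\<lambda>l. \<Sum>i\<le>n. tmul k (x1 i) (partial_eval emb k a n d i x0) l)"

text \<open>Psi_j(y^(1),...,y^(d-1)); the vector y^(p+1) is ys p.\<close>

definition Psi :: "('k::field \<Rightarrow> 'K::field) \<Rightarrow> nat \<Rightarrow> (nat list \<Rightarrow> 'k) \<Rightarrow> nat \<Rightarrow> nat \<Rightarrow> nat
    \<Rightarrow> (nat \<Rightarrow> nat \<Rightarrow> nat \<Rightarrow> 'K) \<Rightarrow> nat \<Rightarrow> 'K" where
  "Psi emb k a n d j ys = (\<lambda>l. \<Sum>js\<in>idx n (d - 1).
      emb (of_nat (fact d) * a (js @ [j])) * tprod k (map (\<lambda>p. ys p (js ! p)) [0..<d - 1]) l)"

definition lin_fun :: "('k::field \<Rightarrow> 'K::field) \<Rightarrow> 'K set \<Rightarrow> ('K \<Rightarrow> 'k) \<Rightarrow> bool" where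
  "lin_fun emb V f \<longleftrightarrow> (\<forall>x\<in>V. \<forall>y\<in>V. f (x + y) = f x + f y) \<and>
     (\<forall>c. \<forall>x\<in>V. f (emb c * x) = c * f x) \<and> (\<forall>x. x \<notin> V \<longrightarrow> f x = 0)"

text \<open>Elements of V^dual \<otimes> F_q[t]/t^(m+1): alpha = sum_i alpha_i t^i.\<close>

definition tduals :: "('k::field \<Rightarrow> 'K::field) \<Rightarrow> 'K set \<Rightarrow> nat \<Rightarrow> (nat \<Rightarrow> 'K \<Rightarrow> 'k) set" where
  "tduals emb V m = {\<alpha>. (\<forall>i\<le>m. lin_fun emb V (\<alpha> i)) \<and> (\<forall>i>m. \<alpha> i = (\<lambda>_. 0))}"

definition pairing :: "(nat \<Rightarrow> 'K \<Rightarrow> 'k::field) \<Rightarrow> (nat \<Rightarrow> 'K) \<Rightarrow> nat \<Rightarrow> 'k" where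
  "pairing \<alpha> y = (\<lambda>l. \<Sum>i\<le>l. \<alpha> i (y (l - i)))"

definition psi_m :: "('k \<Rightarrow> complex) \<Rightarrow> nat \<Rightarrow> (nat \<Rightarrow> 'k) \<Rightarrow> complex" where
  "psi_m \<psi> m c = (\<Prod>i\<le>m. \<psi> (c i))"

definition nontriv_add_char :: "('k::field \<Rightarrow> complex) \<Rightarrow> bool" where
  "nontriv_add_char \<psi> \<longleftrightarrow> (\<forall>x y. \<psi> (x + y) = \<psi> x * \<psi> y) \<and> (\<exists>x. \<psi> x \<noteq> 1)"

definition S_sum :: "('k::field \<Rightarrow> 'K::field) \<Rightarrow> ('k \<Rightarrow> complex) \<Rightarrow> (('K \<Rightarrow> int) \<Rightarrow> int)
    \<Rightarrow> (nat list \<Rightarrow> 'k) \<Rightarrow> nat \<Rightarrow> nat \<Rightarrow> nat \<Rightarrow> (nat \<Rightarrow> 'K \<Rightarrow> 'k) \<Rightarrow> (nat \<Rightarrow> 'K \<Rightarrow> 'k) \<Rightarrow> complex" where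
  "S_sum emb \<psi> D a n d m \<alpha> \<beta> =
     (\<Sum>x0\<in>{x \<in> tvecs (RR_space emb D) m (Suc n). glob_gen emb D n x}.
       \<Sum>x1\<in>tvecs (RR_space emb D) m (Suc n).
         psi_m \<psi> m (\<lambda>l. pairing \<alpha> (form_eval emb m a n d x0) l
                        + pairing \<beta> (grad_dot emb m a n d x1 x0) l))"

definition N_count :: "('k::field \<Rightarrow> 'K::field) \<Rightarrow> (('K \<Rightarrow> int) \<Rightarrow> int)
    \<Rightarrow> (nat list \<Rightarrow> 'k) \<Rightarrow> nat \<Rightarrow> nat \<Rightarrow> nat \<Rightarrow> (nat \<Rightarrow> 'K \<Rightarrow> 'k) \<Rightarrow> nat" where
  "N_count emb D a n d k \<gamma> = card {ys :: nat \<Rightarrow> nat \<Rightarrow> nat \<Rightarrow> 'K.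
      (\<forall>p<d - 1. ys p \<in> tvecs (RR_space emb D) k (Suc n)) \<and>
      (\<forall>p\<ge>d - 1. ys p = (\<lambda>_ _. 0)) \<and>
      (\<forall>i\<le>n. \<forall>y\<in>trunc (RR_space emb D) k. \<forall>l\<le>k.
          pairing \<gamma> (tmul k (Psi emb k a n d i ys) y) l = 0)}"

end

(*
  Write F(x) = M(x, ..., x) with M the symmetric d-linear form of F, computed in power series, so
  that the phase of S is <alpha, M(x0, ..., x0)> + <beta, d M(x1, x0, ..., x0)>.

  For N^(m)(beta): the sum over x1 is a complete character sum of a linear function, hence 0 or
  #P_m. Exchanging the sums and applying Weyl differencing d - 2 times in x0 (with Hoelder's
  inequality to carry the power 2^(d-2)) leaves a phase affine in x0 whose linear part is
  <beta, d! M(x1, h_1, ..., h_(d-2), .)>; orthogonality then counts exactly the tuples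
  (x1, h_1, ..., h_(d-2)) counted by N^(m)(beta).

  For N^(m-m')(alpha): split x0 = u + t^m' h with deg u < m'. Since 2m' > m, the phase is linear in
  h, so the sum over h is again complete, and global generation only depends on u. Differencing
  d - 2 times in u along shifts of degree at most m - m' leaves the linear part
  <alpha, t^m' d! M(h, h_1, ..., h_(d-2), .)>, whose vanishing is the condition of N^(m-m')(alpha).
*)

theory Submission
  imports Defs "HOL-Computational_Algebra.Formal_Power_Series" "HOL-Library.Function_Algebras"
    "HOL-Analysis.Convex"
begin

section \<open>Finite differences of symmetric multilinear maps\<close>

definition multilinear :: "nat \<Rightarrow> ((nat \<Rightarrow> 'a::ab_group_add) \<Rightarrow> 'b::ab_group_add) \<Rightarrow> bool" where
  "multilinear r M \<longleftrightarrow> (\<forall>z z'. (\<forall>q<r. z q = z' q) \<longrightarrow> M z = M z') \<and>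
     (\<forall>z p u w. p < r \<longrightarrow> M (z(p := u + w)) = M (z(p := u)) + M (z(p := w)))"

lemma multilinear_cong: "multilinear r M \<Longrightarrow> (\<And>q. q < r \<Longrightarrow> z q = z' q) \<Longrightarrow> M z = M z'"
  unfolding multilinear_def by blast

lemma multilinear_add:
  "multilinear r M \<Longrightarrow> p < r \<Longrightarrow> M (z(p := u + w)) = M (z(p := u)) + M (z(p := w))"
  unfolding multilinear_def by blast

lemma multilinear_zero:
  assumes "multilinear r M" "p < r" "z p = 0"
  shows "M z = 0"
proof -
  have "M (z(p := 0 + 0)) = M (z(p := 0)) + M (z(p := 0))" by (rule multilinear_add[OF assms(1,2)])
  then show ?thesis using assms(3) by (simp add: fun_upd_idem)
qed

lemma multilinear_diff:
  assumes "multilinear r M" "p < r"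
  shows "M (z(p := u - w)) = M (z(p := u)) - M (z(p := w))"
  using multilinear_add[OF assms, of z "u - w" w] by (simp add: algebra_simps)

lemma multilinear_telescope:
  assumes "multilinear r M"
  shows "M a - M b = (\<Sum>p<r. M (\<lambda>q. if q < p then a q else if q = p then a q - b q else b q))"
proof -
  define c where "c p = (\<lambda>q. if q < p then a q else b q)" for p
  have "M (c (Suc p)) - M (c p) = M (\<lambda>q. if q < p then a q else if q = p then a q - b q else b q)"
    if "p < r" for p
  proof -
    have "(c p)(p := a p) = c (Suc p)" "(c p)(p := b p) = c p"
      "(c p)(p := a p - b p) = (\<lambda>q. if q < p then a q else if q = p then a q - b q else b q)"
      by (auto simp: c_def)
    then show ?thesis using multilinear_diff[OF assms that, of "c p" "a p" "b p"] by simp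
  qed
  moreover have "M (c r) = M a" by (rule multilinear_cong[OF assms]) (auto simp: c_def)
  moreover have "M (c 0) = M b" by (simp add: c_def)
  ultimately show ?thesis using sum_lessThan_telescope[of "\<lambda>p. M (c p)" r] by simp
qed

fun poly_deg_le :: "nat \<Rightarrow> ('a::ab_group_add \<Rightarrow> 'b::ab_group_add) \<Rightarrow> bool" where
  "poly_deg_le 0 f = (\<forall>x y. f x = f y)"
| "poly_deg_le (Suc j) f = (\<forall>h. poly_deg_le j (\<lambda>x. f (x + h) - f x))"

fun iter_diff :: "'a::ab_group_add list \<Rightarrow> ('a \<Rightarrow> 'b::ab_group_add) \<Rightarrow> 'a \<Rightarrow> 'b" where
  "iter_diff [] f = f"
| "iter_diff (k # ks) f = iter_diff ks (\<lambda>x. f (x + k) - f x)"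

lemma poly_deg_le_shift: "poly_deg_le j f \<Longrightarrow> poly_deg_le j (\<lambda>x. f (x + c))"
proof (induction j arbitrary: f)
  case (Suc j)
  have "poly_deg_le j (\<lambda>x. f (x + c + h) - f (x + c))" for h
    using Suc.IH[of "\<lambda>x. f (x + h) - f x"] Suc.prems by simp
  then show ?case by (simp add: ac_simps)
qed simp

lemma poly_deg_le_add: "poly_deg_le j f \<Longrightarrow> poly_deg_le j g \<Longrightarrow> poly_deg_le j (\<lambda>x. f x + g x)"
proof (induction j arbitrary: f g)
  case 0 then show ?case by simp metis
next
  case (Suc j)
  have "poly_deg_le j (\<lambda>x. (f (x + h) - f x) + (g (x + h) - g x))" for h
    using Suc by simp
  then show ?case by (simp add: algebra_simps)
qed

lemma poly_deg_le_const: "poly_deg_le j (\<lambda>_. c)"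
  by (induction j arbitrary: c) simp_all

lemma poly_deg_le_sum:
  "finite I \<Longrightarrow> (\<And>i. i \<in> I \<Longrightarrow> poly_deg_le j (f i)) \<Longrightarrow> poly_deg_le j (\<lambda>x. \<Sum>i\<in>I. f i x)"
  by (induction I rule: finite_induct) (simp_all add: poly_deg_le_const poly_deg_le_add)

lemma poly_deg_le_translate: "poly_deg_le 1 (\<lambda>x. x + c)"
  by (simp add: poly_deg_le_const)

lemma iter_diff_const: "iter_diff ks (\<lambda>_. c) x = (if ks = [] then c else 0)"
  by (induction ks arbitrary: c) simp_all

lemma iter_diff_vanish: "poly_deg_le j f \<Longrightarrow> j < length ks \<Longrightarrow> iter_diff ks f x = 0"
proof (induction ks arbitrary: j f)
  case (Cons k ks)
  show ?case
  proof (cases j)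
    case 0
    then have "(\<lambda>x. f (x + k) - f x) = (\<lambda>_. 0)" using Cons.prems(1) by (simp add: fun_eq_iff)
    then show ?thesis by (simp add: iter_diff_const)
  next
    case (Suc j')
    then show ?thesis using Cons.prems by (auto intro!: Cons.IH[of j'])
  qed
qed simp

lemma iter_diff_add: "iter_diff ks (\<lambda>x. f x + g x) x = iter_diff ks f x + iter_diff ks g x"
proof (induction ks arbitrary: f g)
  case (Cons k ks)
  have "(\<lambda>x. f (x + k) + g (x + k) - (f x + g x)) = (\<lambda>x. (f (x + k) - f x) + (g (x + k) - g x))"
    by (simp add: fun_eq_iff algebra_simps)
  then show ?case using Cons.IH by simp
qed simp

lemma iter_diff_sum: "finite I \<Longrightarrow> iter_diff ks (\<lambda>x. \<Sum>i\<in>I. f i x) x = (\<Sum>i\<in>I. iter_diff ks (f i) x)"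
  by (induction I rule: finite_induct) (simp_all add: iter_diff_const iter_diff_add)

lemma iter_diff_mult_left: "iter_diff ks (\<lambda>x. (c::'b::ring) * f x) x = c * iter_diff ks f x"
proof (induction ks arbitrary: f)
  case (Cons k ks)
  then show ?case by (simp flip: right_diff_distrib)
qed simp

lemma iter_diff_snoc: "iter_diff (ks @ [k]) f x = iter_diff ks f (x + k) - iter_diff ks f x"
  by (induction ks arbitrary: f) simp_all

lemma multilinear_poly_deg_le:
  fixes M :: "(nat \<Rightarrow> 'a::ab_group_add) \<Rightarrow> 'b::ab_group_add" and f :: "nat \<Rightarrow> 'c::ab_group_add \<Rightarrow> 'a"
  assumes "multilinear r M" "\<And>q. q < r \<Longrightarrow> poly_deg_le (e q) (f q)"
  shows "poly_deg_le (\<Sum>q<r. e q) (\<lambda>x. M (\<lambda>q. f q x))"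
proof -
  have "(\<Sum>q<r. e q) = s \<Longrightarrow> (\<And>q. q < r \<Longrightarrow> poly_deg_le (e q) (f q))
    \<Longrightarrow> poly_deg_le s (\<lambda>x. M (\<lambda>q. f q x))" for s e and f :: "nat \<Rightarrow> 'c \<Rightarrow> 'a"
  proof (induction s arbitrary: e f)
    case 0
    then have "f q x = f q y" if "q < r" for q x y using that by (simp add: poly_deg_le.simps(1))
    then show ?case by (simp, metis multilinear_cong[OF assms(1)])
  next
    case (Suc s)
    have "poly_deg_le s (\<lambda>x. M (\<lambda>q. if q < p then f q (x + h) else if q = p then f q (x + h) - f q x else f q x))"
      if p: "p < r" for p h
    proof (cases "e p")
      case 0
      then have "f p (x + h) - f p x = 0" for x using Suc.prems(2)[OF p] by simp
      then show ?thesis using multilinear_zero[OF assms(1) p] by (simp add: poly_deg_le_const)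
    next
      case (Suc e')
      define f' where "f' q = (if q < p then (\<lambda>x. f q (x + h)) else if q = p then (\<lambda>x. f p (x + h) - f p x) else f q)" for q
      have "e p \<le> (\<Sum>q<r. e q)" using p by (intro member_le_sum) auto
      moreover have "(\<Sum>q<r. (e(p := e')) q) = (\<Sum>q<r. e q) - e p + e'"
        using p by (simp add: sum.remove[of "{..<r}" p])
      ultimately have "(\<Sum>q<r. (e(p := e')) q) = s" using \<open>e p = Suc e'\<close> Suc.prems(1) by simp
      moreover have "poly_deg_le ((e(p := e')) q) (f' q)" if "q < r" for q
        using Suc.prems(2)[OF that] \<open>e p = Suc e'\<close> by (auto simp: f'_def intro: poly_deg_le_shift)
      ultimately have "poly_deg_le s (\<lambda>x. M (\<lambda>q. f' q x))" by (rule Suc.IH)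
      then show ?thesis by (simp add: f'_def if_distrib[of "\<lambda>g. g _"] cong: if_cong)
    qed
    then have "poly_deg_le s (\<lambda>x. M (\<lambda>q. f q (x + h)) - M (\<lambda>q. f q x))" for h
      by (simp only: multilinear_telescope[OF assms(1)]) (intro poly_deg_le_sum; simp)
    then show ?case by simp
  qed
  then show ?thesis using assms(2) by blast
qed

lemma iter_diff_multilinear_vanish:
  assumes "multilinear r M" "\<And>q. q < r \<Longrightarrow> poly_deg_le (e q) (f q)" "(\<Sum>q<r. e q) < length ks"
  shows "iter_diff ks (\<lambda>x. M (\<lambda>q. f q x)) x = 0"
  by (rule iter_diff_vanish[OF multilinear_poly_deg_le[OF assms(1,2)] assms(3)])

definition perm_invariant :: "nat \<Rightarrow> ((nat \<Rightarrow> 'a) \<Rightarrow> 'b) \<Rightarrow> bool" where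
  "perm_invariant r M \<longleftrightarrow> (\<forall>\<sigma> z. bij_betw \<sigma> {..<r} {..<r} \<longrightarrow> M (z \<circ> \<sigma>) = M z)"

definition insert_arg :: "'a \<Rightarrow> nat \<Rightarrow> (nat \<Rightarrow> 'a) \<Rightarrow> nat \<Rightarrow> 'a" where
  "insert_arg y p w = (\<lambda>q. if q < p then w q else if q = p then y else w (q - 1))"

lemma insert_arg_0_nth: "insert_arg h 0 (\<lambda>q. hs ! q) = (\<lambda>q. (h # hs) ! q)"
  by (auto simp: insert_arg_def fun_eq_iff nth_Cons')

lemma insert_arg_0_upd: "insert_arg y 0 (z(p := v)) = (insert_arg y 0 z)(Suc p := v)"
  by (auto simp: insert_arg_def fun_eq_iff)

lemma perm_invariant_insert_arg:
  assumes "perm_invariant r M" "p < r"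
  shows "M (insert_arg y p w) = M (insert_arg y 0 w)"
proof -
  define c where "c q = (if q < p then q + 1 else if q = p then 0 else q)" for q
  define ci where "ci q = (if q = 0 then p else if q \<le> p then q - 1 else q)" for q
  have "bij_betw c {..<r} {..<r}"
    by (rule bij_betw_byWitness[where f' = ci]) (use assms(2) in \<open>auto simp: c_def ci_def\<close>)
  then have "M (insert_arg y 0 w \<circ> c) = M (insert_arg y 0 w)" using assms(1) unfolding perm_invariant_def by blast
  moreover have "insert_arg y 0 w \<circ> c = insert_arg y p w" by (auto simp: c_def insert_arg_def fun_eq_iff)
  ultimately show ?thesis by simp
qed

lemma multilinear_insert_arg:
  assumes "multilinear r M"
  shows "multilinear (r - 1) (\<lambda>w. M (insert_arg y 0 w))"
  unfolding multilinear_def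
proof (intro conjI allI impI)
  fix z z' :: "nat \<Rightarrow> 'a" assume "\<forall>q<r - 1. z q = z' q"
  then show "M (insert_arg y 0 z) = M (insert_arg y 0 z')"
    by (intro multilinear_cong[OF assms]) (auto simp: insert_arg_def)
next
  fix z :: "nat \<Rightarrow> 'a" and p u w assume "p < r - 1"
  then show "M (insert_arg y 0 (z(p := u + w))) = M (insert_arg y 0 (z(p := u))) + M (insert_arg y 0 (z(p := w)))"
    unfolding insert_arg_0_upd using multilinear_add[OF assms, of "Suc p"] by simp
qed

lemma perm_invariant_insert_arg_0:
  assumes "perm_invariant r M"
  shows "perm_invariant (r - 1) (\<lambda>w. M (insert_arg y 0 w))"
  unfolding perm_invariant_def
proof (intro allI impI)
  fix \<sigma> :: "nat \<Rightarrow> nat" and z :: "nat \<Rightarrow> 'a"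
  assume \<sigma>: "bij_betw \<sigma> {..<r - 1} {..<r - 1}"
  define \<tau> where "\<tau> = inv_into {..<r - 1} \<sigma>"
  have \<tau>: "bij_betw \<tau> {..<r - 1} {..<r - 1}" unfolding \<tau>_def by (rule bij_betw_inv_into[OF \<sigma>])
  define s where "s q = (if q = 0 then 0 else Suc (\<sigma> (q - 1)))" for q
  define si where "si q = (if q = 0 then 0 else Suc (\<tau> (q - 1)))" for q
  have "bij_betw s {..<r} {..<r}"
  proof (rule bij_betw_byWitness[where f' = si])
    show "\<forall>a\<in>{..<r}. si (s a) = a" "\<forall>a\<in>{..<r}. s (si a) = a"
      using \<sigma> by (auto simp: s_def si_def \<tau>_def bij_betw_def inv_into_f_f f_inv_into_f)
    have "Suc (\<sigma> (q - 1)) < r" "Suc (\<tau> (q - 1)) < r" if "0 < q" "q < r" for q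
    proof -
      have "q - 1 \<in> {..<r - 1}" using that by auto
      then have "\<sigma> (q - 1) \<in> {..<r - 1}" "\<tau> (q - 1) \<in> {..<r - 1}"
        using bij_betwE[OF \<sigma>] bij_betwE[OF \<tau>] by blast+
      then show "Suc (\<sigma> (q - 1)) < r" "Suc (\<tau> (q - 1)) < r" by auto
    qed
    then show "s ` {..<r} \<subseteq> {..<r}" "si ` {..<r} \<subseteq> {..<r}"
      by (auto simp: s_def si_def)
  qed
  then have "M (insert_arg y 0 z \<circ> s) = M (insert_arg y 0 z)" using assms unfolding perm_invariant_def by blast
  moreover have "insert_arg y 0 z \<circ> s = insert_arg y 0 (z \<circ> \<sigma>)" by (auto simp: s_def insert_arg_def fun_eq_iff)
  ultimately show "M (insert_arg y 0 (z \<circ> \<sigma>)) = M (insert_arg y 0 z)" by simp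
qed

text \<open>Each summand of the telescoping sum has one constant argument, hence degree \<open>< r\<close>.\<close>

lemma iter_diff_diagonal_remainder:
  assumes "multilinear r N" "length ks = r"
  shows "iter_diff ks (\<lambda>x. N (\<lambda>q. if q < p then x + h else x) - N (\<lambda>_. x)) x = 0"
proof -
  define f where "f q q' = (if q' < q then (\<lambda>x. x + (if q' < p then h else 0))
    else if q' = q then (\<lambda>_. if q < p then h else 0) else (\<lambda>x. x))" for q q'
  have "N (\<lambda>q. if q < p then x + h else x) - N (\<lambda>_. x) = (\<Sum>q<r. N (\<lambda>q'. f q q' x))" for x
    unfolding multilinear_telescope[OF assms(1)]
    by (intro sum.cong refl arg_cong[where f = N]) (auto simp: f_def)
  moreover have "iter_diff ks (\<lambda>x. N (\<lambda>q'. f q q' x)) x = 0" if "q < r" for q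
  proof (rule iter_diff_multilinear_vanish[OF assms(1)])
    show "poly_deg_le (if q' = q then 0 else 1) (f q q')" for q'
      by (auto simp: f_def poly_deg_le_const poly_deg_le_translate[of 0, simplified]
          poly_deg_le_translate)
    have "(\<Sum>q'<r. if q' = q then 0 else 1::nat) = r - 1"
      using that by (simp add: sum.If_cases flip: Diff_eq)
    then show "(\<Sum>q'<r. if q' = q then 0 else 1::nat) < length ks" using that assms(2) by simp
  qed
  ultimately show ?thesis by (simp add: iter_diff_sum)
qed

theorem iter_diff_diagonal:
  fixes M :: "(nat \<Rightarrow> 'a::ab_group_add) \<Rightarrow> 'b::comm_ring_1"
  assumes "multilinear r M" "perm_invariant r M" "length hs = r"
  shows "iter_diff hs (\<lambda>x. M (\<lambda>_. x)) x = of_nat (fact r) * M (\<lambda>q. hs ! q)"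
  using assms
proof (induction r arbitrary: M hs x)
  case 0
  then show ?case by (simp, intro multilinear_cong[OF "0.prems"(1)]) simp
next
  case (Suc r)
  then obtain h hs' where hs: "hs = h # hs'" and len: "length hs' = r" by (cases hs) auto
  define N where "N w = M (insert_arg h 0 w)" for w
  have N: "multilinear r N" "perm_invariant r N"
    unfolding N_def using multilinear_insert_arg[OF Suc.prems(1)] perm_invariant_insert_arg_0[OF Suc.prems(2)]
    by simp_all
  have diff: "M (\<lambda>_. x + h) - M (\<lambda>_. x) = (\<Sum>p<Suc r. N (\<lambda>q. if q < p then x + h else x))" for x
  proof -
    have "M (\<lambda>_. x + h) - M (\<lambda>_. x) = (\<Sum>p<Suc r. M (insert_arg h p (\<lambda>q. if q < p then x + h else x)))"
      unfolding multilinear_telescope[OF Suc.prems(1)]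
      by (intro sum.cong refl arg_cong[where f = M]) (auto simp: insert_arg_def fun_eq_iff)
    also have "\<dots> = (\<Sum>p<Suc r. N (\<lambda>q. if q < p then x + h else x))"
      unfolding N_def by (intro sum.cong refl perm_invariant_insert_arg[OF Suc.prems(2)]) simp
    finally show ?thesis .
  qed
  have "iter_diff hs' (\<lambda>x. N (\<lambda>q. if q < p then x + h else x)) x = iter_diff hs' (\<lambda>x. N (\<lambda>_. x)) x" for p
  proof -
    have "iter_diff hs' (\<lambda>x. N (\<lambda>_. x) + (N (\<lambda>q. if q < p then x + h else x) - N (\<lambda>_. x))) x
        = iter_diff hs' (\<lambda>x. N (\<lambda>_. x)) x"
      by (simp only: iter_diff_add iter_diff_diagonal_remainder[OF N(1) len] add_0_right)
    then show ?thesis by simp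
  qed
  then have "iter_diff hs (\<lambda>x. M (\<lambda>_. x)) x = (\<Sum>p<Suc r. iter_diff hs' (\<lambda>x. N (\<lambda>_. x)) x)"
    by (simp add: hs diff iter_diff_sum del: sum.lessThan_Suc)
  also have "\<dots> = of_nat (fact (Suc r)) * M (\<lambda>q. hs ! q)"
    using Suc.IH[OF N len] by (simp add: N_def hs insert_arg_0_nth algebra_simps)
  finally show ?case .
qed

corollary iter_diff_diagonal_affine:
  fixes M :: "(nat \<Rightarrow> 'a::ab_group_add) \<Rightarrow> 'b::comm_ring_1"
  assumes "multilinear r M" "perm_invariant r M" "length ks + 1 = r"
  shows "iter_diff ks (\<lambda>x. M (\<lambda>_. x)) x
    = iter_diff ks (\<lambda>x. M (\<lambda>_. x)) 0 + of_nat (fact r) * M (\<lambda>q. (ks @ [x]) ! q)"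
  using iter_diff_diagonal[OF assms(1,2), of "ks @ [x]" 0] assms(3)
  by (simp add: iter_diff_snoc diff_eq_eq add.commute)

text \<open>The polarisation \<open>polar r M a b\<close> is the derivative of the diagonal \<open>M (a, \<dots>, a)\<close> in
  direction \<open>b\<close>.\<close>

definition polar :: "nat \<Rightarrow> ((nat \<Rightarrow> 'a) \<Rightarrow> 'b::comm_monoid_add) \<Rightarrow> 'a \<Rightarrow> 'a \<Rightarrow> 'b" where
  "polar r M a b = (\<Sum>p<r. M (\<lambda>q. if q = p then b else a))"

lemma polar_add:
  assumes "multilinear r M"
  shows "polar r M a (b + b') = polar r M a b + polar r M a b'"
proof -
  have "M (\<lambda>q. if q = p then b + b' else a) = M (\<lambda>q. if q = p then b else a) + M (\<lambda>q. if q = p then b' else a)"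
    if "p < r" for p
    using multilinear_add[OF assms that, of "\<lambda>_. a" b b'] by (simp add: fun_upd_def)
  then show ?thesis unfolding polar_def by (simp add: sum.distrib)
qed

lemma diagonal_expansion:
  fixes M :: "(nat \<Rightarrow> 'a::ab_group_add) \<Rightarrow> 'b::comm_ring_1"
  assumes "multilinear r M"
    and scale: "\<And>z p w. p < r \<Longrightarrow> M (z(p := E w)) = e * M (z(p := w))"
  shows "\<exists>R. M (\<lambda>_. a + E b) = M (\<lambda>_. a) + e * polar r M a b + e * e * R"
proof -
  define Z where "Z p = (\<lambda>q::nat. if q < p then a + E b else if q = p then b else a)" for p :: nat
  define B where "B p = (\<lambda>q::nat. if q = p then b else a)" for p
  have first: "M (\<lambda>_. a + E b) - M (\<lambda>_. a) = (\<Sum>p<r. e * M (Z p))"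
  proof -
    have "M (\<lambda>_. a + E b) - M (\<lambda>_. a) = (\<Sum>p<r. M ((Z p)(p := E b)))"
      unfolding multilinear_telescope[OF assms(1)]
      by (intro sum.cong refl arg_cong[where f = M]) (auto simp: Z_def)
    also have "\<dots> = (\<Sum>p<r. e * M ((Z p)(p := b)))" by (intro sum.cong refl scale) auto
    finally show ?thesis by (simp add: Z_def fun_upd_idem)
  qed
  define W where "W p q' = (\<lambda>q::nat. if q < q' then Z p q else if q = q' then Z p q - B p q else B p q)" for p q'
  have second: "M (Z p) - M (B p) = e * (\<Sum>q'<r. if q' < p then M ((W p q')(q' := b)) else 0)" for p
  proof -
    have "M (W p q') = e * (if q' < p then M ((W p q')(q' := b)) else 0)" if "q' < r" for q'
    proof (cases "q' < p")
      case True
      then have "W p q' = (W p q')(q' := E b)" by (auto simp: W_def Z_def B_def)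
      then show ?thesis using scale[OF that, of "W p q'" b] True by simp
    next
      case False
      then show ?thesis using multilinear_zero[OF assms(1) that] by (simp add: W_def Z_def B_def)
    qed
    moreover have "M (Z p) - M (B p) = (\<Sum>q'<r. M (W p q'))"
      unfolding W_def by (rule multilinear_telescope[OF assms(1)])
    ultimately show ?thesis by (simp add: sum_distrib_left)
  qed
  define R where "R = (\<Sum>p<r. \<Sum>q'<r. if q' < p then M ((W p q')(q' := b)) else 0)"
  have "M (\<lambda>_. a + E b) = M (\<lambda>_. a) + (\<Sum>p<r. e * (M (B p) + (M (Z p) - M (B p))))"
    using first by (simp add: algebra_simps)
  also have "\<dots> = M (\<lambda>_. a) + e * (\<Sum>p<r. M (B p)) + e * e * R"
    unfolding second by (simp add: R_def algebra_simps sum.distrib sum_distrib_left)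
  finally show ?thesis unfolding B_def polar_def by blast
qed

section \<open>Weyl differencing\<close>

definition add_subgroup :: "'a::ab_group_add set \<Rightarrow> bool" where
  "add_subgroup U \<longleftrightarrow> 0 \<in> U \<and> (\<forall>x\<in>U. \<forall>y\<in>U. x + y \<in> U) \<and> (\<forall>x\<in>U. - x \<in> U)"

lemma add_subgroup_zero: "add_subgroup U \<Longrightarrow> 0 \<in> U"
  by (simp add: add_subgroup_def)

lemma add_subgroup_add: "add_subgroup U \<Longrightarrow> x \<in> U \<Longrightarrow> y \<in> U \<Longrightarrow> x + y \<in> U"
  by (simp add: add_subgroup_def)

lemma add_subgroup_uminus: "add_subgroup U \<Longrightarrow> x \<in> U \<Longrightarrow> - x \<in> U"
  by (simp add: add_subgroup_def)

lemma add_subgroup_diff: "add_subgroup U \<Longrightarrow> x \<in> U \<Longrightarrow> y \<in> U \<Longrightarrow> x - y \<in> U"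
  using add_subgroup_add[of U x "- y"] add_subgroup_uminus[of U y] by simp

lemma sum_add_subgroup_shift:
  assumes "add_subgroup U" "k \<in> U"
  shows "(\<Sum>u\<in>U. f (u + k)) = (\<Sum>u\<in>U. f u)"
  by (rule sum.reindex_bij_witness[where i = "\<lambda>u. u - k" and j = "\<lambda>u. u + k"])
     (use assms in \<open>auto intro: add_subgroup_add add_subgroup_diff\<close>)

lemma card_add_subgroup_pos: "add_subgroup U \<Longrightarrow> finite U \<Longrightarrow> card U > 0"
  using add_subgroup_zero card_gt_0_iff by blast

lemma iter_diff_cong_on:
  assumes "add_subgroup X" "set ks \<subseteq> X" "\<And>x. x \<in> X \<Longrightarrow> f x = g x" "u \<in> X"
  shows "iter_diff ks f u = iter_diff ks g u"
  using assms(2-4)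
proof (induction ks arbitrary: f g)
  case Nil then show ?case by simp
next
  case (Cons k ks)
  have "iter_diff ks (\<lambda>x. f (x + k) - f x) u = iter_diff ks (\<lambda>x. g (x + k) - g x) u"
    using Cons.prems by (intro Cons.IH) (auto intro: add_subgroup_add[OF assms(1)])
  then show ?case by simp
qed

lemma iter_diff_in:
  assumes "add_subgroup X" "set ks \<subseteq> X" "\<And>x. x \<in> X \<Longrightarrow> G x \<in> W" "u \<in> X"
    "\<And>a b. a \<in> W \<Longrightarrow> b \<in> W \<Longrightarrow> a - b \<in> W"
  shows "iter_diff ks G u \<in> W"
  using assms(2-4)
proof (induction ks arbitrary: G)
  case Nil then show ?case by simp
next
  case (Cons k ks)
  show ?case using Cons.prems by (simp, intro Cons.IH) (auto intro: assms(5) add_subgroup_add[OF assms(1)])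
qed

lemma iter_diff_hom_on:
  assumes "add_subgroup X" "set ks \<subseteq> X" "\<And>x. x \<in> X \<Longrightarrow> G x \<in> W" "u \<in> X"
    "\<And>a b. a \<in> W \<Longrightarrow> b \<in> W \<Longrightarrow> a - b \<in> W"
    "\<And>a b. a \<in> W \<Longrightarrow> b \<in> W \<Longrightarrow> A (a - b) = A a - A b"
  shows "iter_diff ks (\<lambda>x. A (G x)) u = A (iter_diff ks G u)"
  using assms(2-4)
proof (induction ks arbitrary: G)
  case Nil then show ?case by simp
next
  case (Cons k ks)
  have "iter_diff (k # ks) (\<lambda>x. A (G x)) u = iter_diff ks (\<lambda>x. A (G (x + k)) - A (G x)) u" by simp
  also have "\<dots> = iter_diff ks (\<lambda>x. A (G (x + k) - G x)) u"
    using Cons.prems by (intro iter_diff_cong_on[OF assms(1)]) (auto intro!: assms(6)[symmetric] intro: add_subgroup_add[OF assms(1)])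
  also have "\<dots> = A (iter_diff ks (\<lambda>x. G (x + k) - G x) u)"
    using Cons.prems by (intro Cons.IH) (auto intro: assms(5) add_subgroup_add[OF assms(1)])
  finally show ?case by simp
qed

definition char_diff :: "'a::ab_group_add \<Rightarrow> ('a \<Rightarrow> complex) \<Rightarrow> 'a \<Rightarrow> complex" where
  "char_diff k f u = f (u + k) * cnj (f u)"

fun char_diffs :: "'a::ab_group_add list \<Rightarrow> ('a \<Rightarrow> complex) \<Rightarrow> 'a \<Rightarrow> complex" where
  "char_diffs [] f = f"
| "char_diffs (k # ks) f = char_diffs ks (char_diff k f)"

definition lists_of :: "'a set \<Rightarrow> nat \<Rightarrow> 'a list set" where
  "lists_of K j = {ks. set ks \<subseteq> K \<and> length ks = j}"

lemma finite_lists_of: "finite K \<Longrightarrow> finite (lists_of K j)"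
  unfolding lists_of_def by (rule finite_lists_length_eq)

lemma lists_of_0: "lists_of K 0 = {[]}"
  by (auto simp: lists_of_def)

lemma sum_lists_of_Suc:
  "(\<Sum>ks\<in>lists_of K (Suc j). g ks) = (\<Sum>k\<in>K. \<Sum>ks\<in>lists_of K j. g (k # ks))"
proof -
  have img: "lists_of K (Suc j) = (\<lambda>(k, ks). k # ks) ` (K \<times> lists_of K j)"
    by (auto simp: lists_of_def image_iff length_Suc_conv)
  have inj: "inj_on (\<lambda>(k, ks). k # ks) (K \<times> lists_of K j)" by (auto simp: inj_on_def)
  have "(\<Sum>ks\<in>lists_of K (Suc j). g ks) = (\<Sum>(k, ks)\<in>K \<times> lists_of K j. g (k # ks))"
    unfolding img by (subst sum.reindex[OF inj]) (simp add: case_prod_beta)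
  then show ?thesis by (simp add: sum.cartesian_product)
qed

lemma power_mean_pow2:
  fixes a :: "'i \<Rightarrow> real"
  assumes "\<And>k. k \<in> K \<Longrightarrow> a k \<ge> 0"
  shows "(\<Sum>k\<in>K. a k) ^ 2 ^ j * real (card K) \<le> real (card K) ^ 2 ^ j * (\<Sum>k\<in>K. a k ^ 2 ^ j)"
  using assms
proof (induction j arbitrary: a)
  case (Suc j)
  define c where "c = real (card K)"
  have "(\<Sum>k\<in>K. a k) ^ 2 ^ Suc j * c = ((\<Sum>k\<in>K. a k)\<^sup>2) ^ 2 ^ j * c"
    by (simp add: power_mult[symmetric] mult.commute)
  also have "\<dots> \<le> (c * (\<Sum>k\<in>K. (a k)\<^sup>2)) ^ 2 ^ j * c"
    using sum_squared_le_sum_of_squares[of a K]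
    by (intro mult_right_mono power_mono) (simp_all add: c_def mult.commute)
  also have "\<dots> = c ^ 2 ^ j * ((\<Sum>k\<in>K. (a k)\<^sup>2) ^ 2 ^ j * c)"
    by (simp add: power_mult_distrib)
  also have "\<dots> \<le> c ^ 2 ^ j * (c ^ 2 ^ j * (\<Sum>k\<in>K. ((a k)\<^sup>2) ^ 2 ^ j))"
    unfolding c_def by (intro mult_left_mono Suc.IH) auto
  also have "\<dots> = c ^ 2 ^ Suc j * (\<Sum>k\<in>K. a k ^ 2 ^ Suc j)"
    by (simp add: mult.assoc power_add[symmetric] power_mult[symmetric] mult_2 mult.commute[of 2])
  finally show ?case unfolding c_def .
qed (simp add: mult.commute)

lemma sum_shifted_sums_correlation:
  fixes f :: "'a::ab_group_add \<Rightarrow> complex"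
  assumes U: "add_subgroup U" and K: "add_subgroup K" "K \<subseteq> U"
  shows "(\<Sum>u\<in>U. (\<Sum>k\<in>K. f (u + k)) * cnj (\<Sum>k\<in>K. f (u + k)))
    = of_nat (card K) * (\<Sum>k\<in>K. \<Sum>u\<in>U. char_diff k f u)"
proof -
  have shift: "(\<Sum>u\<in>U. f (u + k) * cnj (f (u + k'))) = (\<Sum>u\<in>U. char_diff (k - k') f u)"
    if "k \<in> K" "k' \<in> K" for k k'
    using sum_add_subgroup_shift[OF U, of "- k'" "\<lambda>u. f (u + k) * cnj (f (u + k'))"]
      add_subgroup_uminus[OF U] that K(2)
    by (auto simp: char_diff_def algebra_simps)
  have "(\<Sum>u\<in>U. (\<Sum>k\<in>K. f (u + k)) * cnj (\<Sum>k\<in>K. f (u + k)))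
      = (\<Sum>k'\<in>K. \<Sum>k\<in>K. \<Sum>u\<in>U. f (u + k) * cnj (f (u + k')))"
  proof -
    have "(\<Sum>u\<in>U. (\<Sum>k\<in>K. f (u + k)) * cnj (\<Sum>k\<in>K. f (u + k)))
        = (\<Sum>u\<in>U. \<Sum>k'\<in>K. \<Sum>k\<in>K. f (u + k) * cnj (f (u + k')))"
      by (simp add: sum_distrib_left sum_distrib_right cnj_sum)
    also have "\<dots> = (\<Sum>k'\<in>K. \<Sum>u\<in>U. \<Sum>k\<in>K. f (u + k) * cnj (f (u + k')))"
      by (rule sum.swap)
    finally show ?thesis by (simp only: sum.swap[of _ U K])
  qed
  also have "\<dots> = (\<Sum>k'\<in>K. \<Sum>k\<in>K. \<Sum>u\<in>U. char_diff (k - k') f u)"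
    by (simp add: shift)
  also have "\<dots> = (\<Sum>k'\<in>K. \<Sum>k\<in>K. \<Sum>u\<in>U. char_diff k f u)"
  proof (rule sum.cong[OF refl])
    fix k' assume "k' \<in> K"
    then show "(\<Sum>k\<in>K. \<Sum>u\<in>U. char_diff (k - k') f u) = (\<Sum>k\<in>K. \<Sum>u\<in>U. char_diff k f u)"
      using sum_add_subgroup_shift[OF K(1) add_subgroup_uminus[OF K(1)], of k' "\<lambda>k. \<Sum>u\<in>U. char_diff k f u"]
      by simp
  qed
  finally show ?thesis by simp
qed

text \<open>Averaging \<open>f\<close> over the translates by \<open>K\<close> and applying Cauchy--Schwarz.\<close>

lemma weyl_differencing_step:
  fixes f :: "'a::ab_group_add \<Rightarrow> complex"
  assumes U: "add_subgroup U" "finite U" and K: "add_subgroup K" "K \<subseteq> U"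
  shows "cmod (\<Sum>u\<in>U. f u) ^ 2 * real (card K) \<le> real (card U) * (\<Sum>k\<in>K. cmod (\<Sum>u\<in>U. char_diff k f u))"
proof -
  have cK: "card K > 0" using card_add_subgroup_pos[OF K(1)] finite_subset[OF K(2) U(2)] by blast
  define s where "s u = (\<Sum>k\<in>K. f (u + k))" for u
  have "(\<Sum>u\<in>U. s u) = (\<Sum>k\<in>K. \<Sum>u\<in>U. f (u + k))"
    unfolding s_def by (rule sum.swap)
  also have "\<dots> = (\<Sum>k\<in>K. \<Sum>u\<in>U. f u)"
    using K(2) by (intro sum.cong refl sum_add_subgroup_shift[OF U(1)]) auto
  finally have "real (card K) * cmod (\<Sum>u\<in>U. f u) = cmod (\<Sum>u\<in>U. s u)"
    by (simp add: norm_mult)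
  also have "\<dots> \<le> (\<Sum>u\<in>U. cmod (s u))" by (rule norm_sum)
  finally have "(real (card K) * cmod (\<Sum>u\<in>U. f u)) ^ 2 \<le> (\<Sum>u\<in>U. cmod (s u)) ^ 2"
    by (intro power_mono) simp_all
  also have "\<dots> \<le> real (card U) * (\<Sum>u\<in>U. cmod (s u) ^ 2)"
    using sum_squared_le_sum_of_squares[of "\<lambda>u. cmod (s u)" U] by (simp add: mult.commute)
  also have "(\<Sum>u\<in>U. cmod (s u) ^ 2) \<le> real (card K) * (\<Sum>k\<in>K. cmod (\<Sum>u\<in>U. char_diff k f u))"
  proof -
    have "complex_of_real (\<Sum>u\<in>U. cmod (s u) ^ 2) = of_nat (card K) * (\<Sum>k\<in>K. \<Sum>u\<in>U. char_diff k f u)"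
      unfolding of_real_sum complex_norm_square s_def by (rule sum_shifted_sums_correlation[OF U(1) K])
    then have "cmod (complex_of_real (\<Sum>u\<in>U. cmod (s u) ^ 2))
        = cmod (of_nat (card K) * (\<Sum>k\<in>K. \<Sum>u\<in>U. char_diff k f u))"
      by (rule arg_cong)
    moreover have "0 \<le> (\<Sum>u\<in>U. cmod (s u) ^ 2)" by (simp add: sum_nonneg)
    ultimately have "(\<Sum>u\<in>U. cmod (s u) ^ 2) = real (card K) * cmod (\<Sum>k\<in>K. \<Sum>u\<in>U. char_diff k f u)"
      by (simp only: norm_of_real abs_of_nonneg norm_mult norm_of_nat)
    also have "\<dots> \<le> real (card K) * (\<Sum>k\<in>K. cmod (\<Sum>u\<in>U. char_diff k f u))"
      by (intro mult_left_mono norm_sum) simp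
    finally show ?thesis .
  qed
  then have "real (card U) * (\<Sum>u\<in>U. cmod (s u) ^ 2)
      \<le> real (card U) * (real (card K) * (\<Sum>k\<in>K. cmod (\<Sum>u\<in>U. char_diff k f u)))"
    by (rule mult_left_mono) simp
  finally have "real (card K) * (cmod (\<Sum>u\<in>U. f u) ^ 2 * real (card K))
      \<le> real (card K) * (real (card U) * (\<Sum>k\<in>K. cmod (\<Sum>u\<in>U. char_diff k f u)))"
    by (simp add: power2_eq_square algebra_simps)
  then show ?thesis using cK by simp
qed

theorem weyl_differencing:
  fixes f :: "'a::ab_group_add \<Rightarrow> complex"
  assumes U: "add_subgroup U" "finite U" and K: "add_subgroup K" "K \<subseteq> U"
  shows "cmod (\<Sum>u\<in>U. f u) ^ 2 ^ j * real (card K) ^ j * real (card U)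
    \<le> real (card U) ^ 2 ^ j * (\<Sum>ks\<in>lists_of K j. cmod (\<Sum>u\<in>U. char_diffs ks f u))"
proof (induction j arbitrary: f)
  case 0
  then show ?case by (simp add: lists_of_0 mult.commute)
next
  case (Suc j)
  define N :: nat where "N = 2 ^ j"
  define A where "A = cmod (\<Sum>u\<in>U. f u)"
  define B where "B k = cmod (\<Sum>u\<in>U. char_diff k f u)" for k
  define C where "C k = (\<Sum>ks\<in>lists_of K j. cmod (\<Sum>u\<in>U. char_diffs ks (char_diff k f) u))" for k
  define u where "u = real (card U)"
  define c where "c = real (card K)"
  have c: "c > 0" using card_add_subgroup_pos[OF K(1)] finite_subset[OF K(2) U(2)] by (simp add: c_def)
  have "(A\<^sup>2 * c) ^ N * c \<le> (u * (\<Sum>k\<in>K. B k)) ^ N * c"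
    unfolding A_def B_def u_def c_def by (intro mult_right_mono power_mono weyl_differencing_step[OF U K]) simp_all
  also have "\<dots> = u ^ N * ((\<Sum>k\<in>K. B k) ^ N * c)" by (simp add: power_mult_distrib)
  also have "\<dots> \<le> u ^ N * (c ^ N * (\<Sum>k\<in>K. B k ^ N))"
    unfolding N_def c_def by (intro mult_left_mono power_mean_pow2) (simp_all add: B_def u_def)
  finally have first: "(A\<^sup>2 * c) ^ N * c \<le> u ^ N * (c ^ N * (\<Sum>k\<in>K. B k ^ N))" .
  have "(\<Sum>k\<in>K. B k ^ N) * (c ^ j * u) = (\<Sum>k\<in>K. B k ^ N * c ^ j * u)"
    by (simp add: sum_distrib_right mult.assoc)
  also have "\<dots> \<le> (\<Sum>k\<in>K. u ^ N * C k)"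
    unfolding B_def C_def u_def c_def N_def by (intro sum_mono Suc.IH)
  finally have second: "(\<Sum>k\<in>K. B k ^ N) * (c ^ j * u) \<le> u ^ N * (\<Sum>k\<in>K. C k)"
    by (simp add: sum_distrib_left)
  have "A ^ (2 * N) = (A\<^sup>2) ^ N" by (rule power_mult)
  then have "c ^ N * (A ^ (2 * N) * c ^ Suc j * u) = (A\<^sup>2 * c) ^ N * c * (c ^ j * u)"
    by (simp add: power_mult_distrib mult_ac)
  also have "\<dots> \<le> u ^ N * (c ^ N * (\<Sum>k\<in>K. B k ^ N)) * (c ^ j * u)"
    by (rule mult_right_mono[OF first]) (simp add: u_def c_def)
  also have "\<dots> = c ^ N * u ^ N * ((\<Sum>k\<in>K. B k ^ N) * (c ^ j * u))" by (simp add: mult_ac)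
  also have "\<dots> \<le> c ^ N * u ^ N * (u ^ N * (\<Sum>k\<in>K. C k))"
    by (intro mult_left_mono second) (simp add: u_def c_def)
  also have "\<dots> = c ^ N * (u ^ (2 * N) * (\<Sum>k\<in>K. C k))"
    unfolding mult_2 power_add by (simp only: mult_ac)
  finally have "A ^ (2 * N) * c ^ Suc j * u \<le> u ^ (2 * N) * (\<Sum>k\<in>K. C k)"
    using c by simp
  then show ?case
    by (simp add: A_def C_def u_def c_def N_def sum_lists_of_Suc)
qed


theorem weyl_differencing_sum:
  fixes f :: "'i \<Rightarrow> 'a::ab_group_add \<Rightarrow> complex"
  assumes U: "add_subgroup U" "finite U" and K: "add_subgroup K" "K \<subseteq> U"
    and bound: "\<And>i ks. i \<in> I \<Longrightarrow> ks \<in> lists_of K j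
      \<Longrightarrow> cmod (\<Sum>u\<in>U. char_diffs ks (f i) u) \<le> real (card U) * c i ks"
  shows "(\<Sum>i\<in>I. cmod (\<Sum>u\<in>U. f i u)) ^ 2 ^ j * real (card I) * real (card K) ^ j
    \<le> real (card I) ^ 2 ^ j * real (card U) ^ 2 ^ j * (\<Sum>i\<in>I. \<Sum>ks\<in>lists_of K j. c i ks)"
proof -
  define N :: nat where "N = 2 ^ j"
  define b where "b i = cmod (\<Sum>u\<in>U. f i u)" for i
  define u where "u = real (card U)"
  have u: "u > 0" using card_add_subgroup_pos[OF U] by (simp add: u_def)
  have "(\<Sum>i\<in>I. b i) ^ N * real (card I) * real (card K) ^ j * u
      \<le> real (card I) ^ N * (\<Sum>i\<in>I. b i ^ N) * (real (card K) ^ j * u)"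
    unfolding N_def mult.assoc[symmetric]
    by (intro mult_right_mono power_mean_pow2) (simp_all add: b_def u_def)
  also have "\<dots> = real (card I) ^ N * (\<Sum>i\<in>I. b i ^ N * real (card K) ^ j * u)"
    by (simp add: sum_distrib_right mult.assoc)
  also have "\<dots> \<le> real (card I) ^ N * (\<Sum>i\<in>I. u ^ N * (\<Sum>ks\<in>lists_of K j. u * c i ks))"
  proof (intro mult_left_mono sum_mono)
    fix i assume i: "i \<in> I"
    have "b i ^ N * real (card K) ^ j * u \<le> u ^ N * (\<Sum>ks\<in>lists_of K j. cmod (\<Sum>u\<in>U. char_diffs ks (f i) u))"
      unfolding b_def u_def N_def by (rule weyl_differencing[OF U K])
    also have "\<dots> \<le> u ^ N * (\<Sum>ks\<in>lists_of K j. u * c i ks)"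
      unfolding u_def by (intro mult_left_mono sum_mono bound[OF i]) simp_all
    finally show "b i ^ N * real (card K) ^ j * u \<le> u ^ N * (\<Sum>ks\<in>lists_of K j. u * c i ks)" .
  qed simp
  also have "\<dots> = real (card I) ^ N * u ^ N * (\<Sum>i\<in>I. \<Sum>ks\<in>lists_of K j. c i ks) * u"
    by (simp add: sum_distrib_left mult_ac)
  finally show ?thesis unfolding b_def N_def u_def by (rule mult_right_le_imp_le[OF _ u[unfolded u_def]])
qed

section \<open>Additive characters\<close>

definition add_char :: "('a::ab_group_add \<Rightarrow> complex) \<Rightarrow> bool" where
  "add_char \<psi> \<longleftrightarrow> \<psi> 0 = 1 \<and> (\<forall>x y. \<psi> (x + y) = \<psi> x * \<psi> y) \<and> (\<forall>x. cnj (\<psi> x) = \<psi> (- x))"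

lemma add_char_add: "add_char \<psi> \<Longrightarrow> \<psi> (x + y) = \<psi> x * \<psi> y"
  by (simp add: add_char_def)

lemma add_char_diff: "add_char \<psi> \<Longrightarrow> \<psi> (x - y) = \<psi> x * cnj (\<psi> y)"
  unfolding add_char_def by (metis diff_conv_add_uminus)

lemma norm_add_char:
  assumes "add_char \<psi>"
  shows "cmod (\<psi> x) = 1"
proof -
  have "\<psi> x * cnj (\<psi> x) = 1"
    using assms add_char_add[OF assms, of x "- x"] by (simp add: add_char_def)
  then have "(cmod (\<psi> x))\<^sup>2 = 1" by (metis complex_norm_square of_real_eq_1_iff)
  then show ?thesis using norm_ge_zero[of "\<psi> x"] by (auto simp: power2_eq_1_iff)
qed

lemma char_diffs_add_char:
  assumes "add_char \<psi>"
  shows "char_diffs ks (\<lambda>u. \<psi> (\<phi> u)) u = \<psi> (iter_diff ks \<phi> u)"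
proof (induction ks arbitrary: \<phi>)
  case (Cons k ks)
  have "char_diff k (\<lambda>u. \<psi> (\<phi> u)) = (\<lambda>u. \<psi> (\<phi> (u + k) - \<phi> u))"
    by (simp add: char_diff_def fun_eq_iff add_char_diff[OF assms])
  then show ?case using Cons.IH by simp
qed simp

lemma sum_add_char_additive:
  assumes "add_char \<psi>" "add_subgroup U" "finite U"
    and L: "\<And>x y. x \<in> U \<Longrightarrow> y \<in> U \<Longrightarrow> L (x + y) = L x + L y"
  shows "(\<Sum>u\<in>U. \<psi> (L u)) = (if \<forall>u\<in>U. \<psi> (L u) = 1 then of_nat (card U) else 0)"
proof (cases "\<forall>u\<in>U. \<psi> (L u) = 1")
  case False
  then obtain u0 where u0: "u0 \<in> U" "\<psi> (L u0) \<noteq> 1" by blast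
  have "(\<Sum>u\<in>U. \<psi> (L u)) = (\<Sum>u\<in>U. \<psi> (L (u + u0)))"
    using sum_add_subgroup_shift[OF assms(2) u0(1), of "\<lambda>u. \<psi> (L u)"] by simp
  also have "\<dots> = \<psi> (L u0) * (\<Sum>u\<in>U. \<psi> (L u))"
    using L u0(1) by (simp add: add_char_add[OF assms(1)] sum_distrib_left mult.commute)
  finally have "(1 - \<psi> (L u0)) * (\<Sum>u\<in>U. \<psi> (L u)) = 0" by (simp add: algebra_simps)
  then show ?thesis using u0 by (simp add: if_not_P[OF False])
qed simp

lemma norm_sum_add_char_affine:
  assumes "add_char \<psi>" "add_subgroup U" "finite U"
    and L: "\<And>x y. x \<in> U \<Longrightarrow> y \<in> U \<Longrightarrow> L (x + y) = L x + L y"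
    and \<phi>: "\<And>u. u \<in> U \<Longrightarrow> \<phi> u = c + L u"
  shows "cmod (\<Sum>u\<in>U. \<psi> (\<phi> u)) = (if \<forall>u\<in>U. \<psi> (L u) = 1 then real (card U) else 0)"
proof -
  have "(\<Sum>u\<in>U. \<psi> (\<phi> u)) = \<psi> c * (\<Sum>u\<in>U. \<psi> (L u))"
    using \<phi> by (simp add: add_char_add[OF assms(1)] sum_distrib_left)
  then show ?thesis
    by (simp add: norm_mult norm_add_char[OF assms(1)] sum_add_char_additive[OF assms(1-3) L])
qed

text \<open>Each inner sum over \<open>B\<close> is a nonnegative real, so the outer sum of norms is the norm of the
  double sum.\<close>

lemma sum_norm_sum_add_char_swap:
  assumes "add_char \<psi>" "add_subgroup B" "finite B"
    and L: "\<And>a x y. a \<in> A \<Longrightarrow> x \<in> B \<Longrightarrow> y \<in> B \<Longrightarrow> L a (x + y) = L a x + L a y"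
  shows "(\<Sum>a\<in>A. cmod (\<Sum>b\<in>B. \<psi> (L a b))) \<le> (\<Sum>b\<in>B. cmod (\<Sum>a\<in>A. \<psi> (L a b)))"
proof -
  define r where "r a = (if \<forall>b\<in>B. \<psi> (L a b) = 1 then real (card B) else 0)" for a
  have inner: "(\<Sum>b\<in>B. \<psi> (L a b)) = complex_of_real (r a)" if "a \<in> A" for a
    using sum_add_char_additive[OF assms(1-3), of "L a"] L[OF that] by (simp add: r_def)
  have r: "r a \<ge> 0" for a by (simp add: r_def)
  have "(\<Sum>a\<in>A. cmod (\<Sum>b\<in>B. \<psi> (L a b))) = (\<Sum>a\<in>A. r a)"
    using r by (simp add: inner)
  also have "\<dots> = cmod (\<Sum>a\<in>A. \<Sum>b\<in>B. \<psi> (L a b))"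
    using r by (simp add: inner sum_nonneg flip: of_real_sum)
  also have "\<dots> = cmod (\<Sum>b\<in>B. \<Sum>a\<in>A. \<psi> (L a b))" by (simp only: sum.swap[of _ A B])
  also have "\<dots> \<le> (\<Sum>b\<in>B. cmod (\<Sum>a\<in>A. \<psi> (L a b)))" by (rule norm_sum)
  finally show ?thesis .
qed

section \<open>The multilinear form of \<open>F\<close> over power series\<close>

text \<open>The truncated products \<open>tmul\<close> and \<open>tprod\<close> are coefficients of products of power series,
  so all computations are done in \<open>'K fps\<close> and truncated only inside the pairings.\<close>

lemma Abs_fps_add: "Abs_fps (f + g) = Abs_fps f + Abs_fps g"
  by (rule fps_ext) simp

lemma Abs_fps_mult_const: "Abs_fps (\<lambda>l. (c::'a::comm_ring_1) * f l) = fps_const c * Abs_fps f"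
  by (rule fps_ext) (simp add: fps_const_mult_left)

lemma fps_mult_nth_cong:
  assumes "\<And>i. i \<le> j \<Longrightarrow> fps_nth f i = fps_nth f' i" "\<And>i. i \<le> j \<Longrightarrow> fps_nth g i = fps_nth g' i"
  shows "fps_nth (f * g) j = fps_nth (f' * g') j"
  unfolding fps_mult_nth using assms by (intro sum.cong refl) auto

lemma nth_fps_X_power_mult_X_power_mult:
  assumes "m + 1 \<le> 2 * s" "l \<le> m"
  shows "fps_nth (fps_X ^ s * fps_X ^ s * R) l = 0"
  using assms by (simp add: fps_X_power_mult_nth flip: power_add mult.assoc)

definition shift_vec :: "nat \<Rightarrow> (nat \<Rightarrow> nat \<Rightarrow> 'a::zero) \<Rightarrow> nat \<Rightarrow> nat \<Rightarrow> 'a" where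
  "shift_vec s w = (\<lambda>j l. if s \<le> l then w j (l - s) else 0)"

lemma Abs_fps_shift: "Abs_fps (\<lambda>l. if s \<le> l then f (l - s) else (0::'a::comm_ring_1)) = fps_X ^ s * Abs_fps f"
  by (rule fps_ext) (simp add: fps_X_power_mult_nth)

definition scale_vec :: "'a::times \<Rightarrow> (nat \<Rightarrow> nat \<Rightarrow> 'a) \<Rightarrow> nat \<Rightarrow> nat \<Rightarrow> 'a" where
  "scale_vec c w = (\<lambda>j l. c * w j l)"

definition multi_form :: "(nat list \<Rightarrow> 'a::comm_ring_1) \<Rightarrow> nat \<Rightarrow> nat \<Rightarrow> (nat \<Rightarrow> nat \<Rightarrow> nat \<Rightarrow> 'a) \<Rightarrow> 'a fps" where
  "multi_form c n r z = (\<Sum>js\<in>idx n r. fps_const (c js) * (\<Prod>p<r. Abs_fps (z p (js ! p))))"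

lemma finite_idx: "finite (idx n r)"
  unfolding idx_def using finite_lists_length_eq[of "{..n}" r] by (simp add: conj_commute)

lemma prod_lessThan_fun_upd:
  fixes z :: "nat \<Rightarrow> 'b" and F :: "'b \<Rightarrow> nat \<Rightarrow> 'c::comm_monoid_mult"
  assumes "p < r"
  shows "(\<Prod>q<r. F ((z(p := v)) q) q) = F v p * (\<Prod>q\<in>{..<r} - {p}. F (z q) q)"
proof -
  have "(\<Prod>q<r. F ((z(p := v)) q) q) = F ((z(p := v)) p) p * (\<Prod>q\<in>{..<r} - {p}. F ((z(p := v)) q) q)"
    using assms by (intro prod.remove) auto
  also have "(\<Prod>q\<in>{..<r} - {p}. F ((z(p := v)) q) q) = (\<Prod>q\<in>{..<r} - {p}. F (z q) q)"
    by (rule prod.cong) auto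
  finally show ?thesis by simp
qed

lemma multi_form_fun_upd:
  assumes "p < r"
  shows "multi_form c n r (z(p := v)) = (\<Sum>js\<in>idx n r. fps_const (c js) * (Abs_fps (v (js ! p)) * (\<Prod>q\<in>{..<r} - {p}. Abs_fps (z q (js ! q)))))"
  unfolding multi_form_def
proof (rule sum.cong[OF refl])
  fix js
  show "fps_const (c js) * (\<Prod>q<r. Abs_fps ((z(p := v)) q (js ! q))) =
    fps_const (c js) * (Abs_fps (v (js ! p)) * (\<Prod>q\<in>{..<r} - {p}. Abs_fps (z q (js ! q))))"
    using prod_lessThan_fun_upd[OF assms, of "\<lambda>x q. Abs_fps (x (js ! q))" z v] by simp
qed

lemma multilinear_multi_form: "multilinear r (multi_form c n r)"
  unfolding multilinear_def
proof (intro conjI allI impI)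
  fix z z' :: "nat \<Rightarrow> nat \<Rightarrow> nat \<Rightarrow> 'a" assume "\<forall>q<r. z q = z' q"
  then show "multi_form c n r z = multi_form c n r z'" unfolding multi_form_def by (intro sum.cong refl arg_cong2[where f = "(*)"] prod.cong) auto
next
  fix z :: "nat \<Rightarrow> nat \<Rightarrow> nat \<Rightarrow> 'a" and p u w assume p: "p < r"
  show "multi_form c n r (z(p := u + w)) = multi_form c n r (z(p := u)) + multi_form c n r (z(p := w))"
    unfolding multi_form_fun_upd[OF p] by (simp add: Abs_fps_add algebra_simps sum.distrib)
qed

lemma multi_form_shift_vec:
  assumes "p < r"
  shows "multi_form c n r (z(p := shift_vec s w)) = fps_X ^ s * multi_form c n r (z(p := w))"
  unfolding multi_form_fun_upd[OF assms] shift_vec_def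
  by (simp add: Abs_fps_shift sum_distrib_left algebra_simps)

lemma multi_form_scale_vec:
  assumes "p < r"
  shows "multi_form c n r (z(p := scale_vec e w)) = fps_const e * multi_form c n r (z(p := w))"
  unfolding multi_form_fun_upd[OF assms] scale_vec_def
  by (simp add: Abs_fps_mult_const sum_distrib_left algebra_simps)

lemma mset_map_nth_perm:
  assumes "bij_betw \<tau> {..<r} {..<r}" "length js = r"
  shows "mset (map (\<lambda>q. js ! \<tau> q) [0..<r]) = mset js"
proof -
  have "mset (map (\<lambda>q. js ! \<tau> q) [0..<r]) = image_mset (nth js) (image_mset \<tau> (mset_set {..<r}))"
    by (simp add: mset_map multiset.map_comp o_def atLeast0LessThan[symmetric] mset_upt)
  also have "image_mset \<tau> (mset_set {..<r}) = mset_set {..<r}"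
    using assms(1) by (simp add: image_mset_mset_set bij_betw_def)
  also have "image_mset (nth js) (mset_set {..<r}) = mset js"
    using assms(2) map_nth[of js] by (metis mset_map mset_upt atLeast0LessThan)
  finally show ?thesis .
qed

lemma bij_betw_idx_permute:
  assumes "bij_betw \<tau> {..<r} {..<r}"
  shows "bij_betw (\<lambda>js. map (\<lambda>q. js ! \<tau> q) [0..<r]) (idx n r) (idx n r)"
proof (rule bij_betw_byWitness[where f' = "\<lambda>js. map (\<lambda>q. js ! inv_into {..<r} \<tau> q) [0..<r]"])
  have \<tau>: "\<tau> q < r" "inv_into {..<r} \<tau> q < r" "\<tau> (inv_into {..<r} \<tau> q) = q" "inv_into {..<r} \<tau> (\<tau> q) = q"
    if "q < r" for q
    using that assms bij_betwE[OF bij_betw_inv_into[OF assms]]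
    by (auto simp: bij_betw_def f_inv_into_f inv_into_f_f)
  show "\<forall>js\<in>idx n r. map (\<lambda>q. map (\<lambda>q. js ! \<tau> q) [0..<r] ! inv_into {..<r} \<tau> q) [0..<r] = js"
    "\<forall>js\<in>idx n r. map (\<lambda>q. map (\<lambda>q. js ! inv_into {..<r} \<tau> q) [0..<r] ! \<tau> q) [0..<r] = js"
    using \<tau> by (auto simp: idx_def intro!: nth_equalityI)
  show "(\<lambda>js. map (\<lambda>q. js ! \<tau> q) [0..<r]) ` idx n r \<subseteq> idx n r"
    "(\<lambda>js. map (\<lambda>q. js ! inv_into {..<r} \<tau> q) [0..<r]) ` idx n r \<subseteq> idx n r"
    using \<tau> by (auto simp: idx_def) (meson atMost_iff nth_mem subsetD)+
qed

lemma perm_invariant_multi_form: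
  assumes c: "\<And>js js'. mset js = mset js' \<Longrightarrow> c js = c js'"
  shows "perm_invariant r (multi_form c n r)"
  unfolding perm_invariant_def
proof (intro allI impI)
  fix \<sigma> :: "nat \<Rightarrow> nat" and z :: "nat \<Rightarrow> nat \<Rightarrow> nat \<Rightarrow> 'a"
  assume \<sigma>: "bij_betw \<sigma> {..<r} {..<r}"
  define \<tau> where "\<tau> = inv_into {..<r} \<sigma>"
  have \<tau>: "bij_betw \<tau> {..<r} {..<r}" unfolding \<tau>_def by (rule bij_betw_inv_into[OF \<sigma>])
  define g where "g js = fps_const (c js) * (\<Prod>q<r. Abs_fps (z q (js ! q)))" for js
  have "fps_const (c js) * (\<Prod>p<r. Abs_fps (z (\<sigma> p) (js ! p))) = g (map (\<lambda>q. js ! \<tau> q) [0..<r])"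
    if "js \<in> idx n r" for js
  proof -
    have "(\<Prod>p<r. Abs_fps (z (\<sigma> p) (js ! p))) = (\<Prod>q<r. Abs_fps (z q (js ! \<tau> q)))"
      using \<sigma> by (intro prod.reindex_bij_witness[where i = \<tau> and j = \<sigma>])
        (use bij_betwE[OF \<tau>] in \<open>auto simp: \<tau>_def bij_betw_def f_inv_into_f inv_into_f_f\<close>)
    moreover have "c (map (\<lambda>q. js ! \<tau> q) [0..<r]) = c js"
      using that by (intro c mset_map_nth_perm[OF \<tau>]) (simp add: idx_def)
    ultimately show ?thesis by (simp add: g_def)
  qed
  then have "multi_form c n r (z \<circ> \<sigma>) = (\<Sum>js\<in>idx n r. g (map (\<lambda>q. js ! \<tau> q) [0..<r]))"
    unfolding multi_form_def by (intro sum.cong) simp_all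
  also have "\<dots> = multi_form c n r z"
    unfolding multi_form_def g_def[symmetric] by (rule sum.reindex_bij_betw[OF bij_betw_idx_permute[OF \<tau>]])
  finally show "multi_form c n r (z \<circ> \<sigma>) = multi_form c n r z" .
qed

lemma prod_list_map_nth: "prod_list (map f xs) = (\<Prod>p<length xs. f (xs ! p))"
  by (induction xs) (simp_all add: prod.lessThan_Suc_shift del: prod.lessThan_Suc)

lemma prod_list_map_upt: "prod_list (map g [0..<N]) = (\<Prod>p<N. g p)"
  by (simp add: prod_list_map_nth)

lemma tprod_eq_fps: "tprod k xs l = (if l \<le> k then fps_nth (prod_list (map Abs_fps xs)) l else 0)"
proof (induction xs arbitrary: l)
  case Nil then show ?case by (simp add: tprod_def tone_def)
next
  case (Cons x xs)
  have "tprod k (x # xs) l = tmul k x (tprod k xs) l" by (simp add: tprod_def)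
  also have "\<dots> = (if l \<le> k then (\<Sum>i\<le>l. x i * fps_nth (prod_list (map Abs_fps xs)) (l - i)) else 0)"
    unfolding tmul_def using Cons.IH by (auto intro!: sum.cong)
  also have "\<dots> = (if l \<le> k then fps_nth (prod_list (map Abs_fps (x # xs))) l else 0)"
    by (simp add: fps_mult_nth atLeast0AtMost)
  finally show ?case .
qed

lemma tmul_eq_fps:
  assumes "\<And>j. j \<le> k \<Longrightarrow> y j = fps_nth (G) j"
  shows "tmul k x y l = (if l \<le> k then fps_nth ((Abs_fps x * G)) l else 0)"
  unfolding tmul_def using assms by (auto simp: fps_mult_nth atLeast0AtMost intro!: sum.cong)

lemma form_eval_eq_fps:
  "form_eval emb k a n r x l = (if l \<le> k then fps_nth (multi_form (\<lambda>js. emb (a js)) n r (\<lambda>_. x)) l else 0)"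
proof -
  have "tprod k (map x js) l = (if l \<le> k then fps_nth ((\<Prod>p<r. Abs_fps (x (js ! p)))) l else 0)"
    if "js \<in> idx n r" for js
    using that by (simp add: tprod_eq_fps prod_list_map_nth idx_def)
  then show ?thesis
    unfolding form_eval_def multi_form_def by (auto simp: fps_sum_nth intro!: sum.cong)
qed

definition Psi_fps :: "('k::field \<Rightarrow> 'K::field) \<Rightarrow> (nat list \<Rightarrow> 'k) \<Rightarrow> nat \<Rightarrow> nat \<Rightarrow> nat
    \<Rightarrow> (nat \<Rightarrow> nat \<Rightarrow> nat \<Rightarrow> 'K) \<Rightarrow> 'K fps" where
  "Psi_fps emb a n r i ys = (\<Sum>js\<in>idx n (r - 1).
      fps_const (emb (of_nat (fact r) * a (js @ [i]))) * (\<Prod>p<r - 1. Abs_fps (ys p (js ! p))))"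

lemma Psi_eq_fps: "Psi emb k a n r i ys l = (if l \<le> k then fps_nth (Psi_fps emb a n r i ys) l else 0)"
proof -
  have "tprod k (map (\<lambda>p. ys p (js ! p)) [0..<r - 1]) l = (if l \<le> k then fps_nth ((\<Prod>p<r - 1. Abs_fps (ys p (js ! p)))) l else 0)" for js
    by (simp add: tprod_eq_fps prod_list_map_upt)
  then show ?thesis
    unfolding Psi_def Psi_fps_def by (auto simp: fps_sum_nth intro!: sum.cong)
qed

lemma prod_list_remove_nth:
  assumes "p < length xs"
  shows "prod_list (map f (take p xs @ drop (Suc p) xs)) = (\<Prod>q\<in>{..<length xs} - {p}. f (xs ! q))"
proof -
  have xs: "xs = map (nth xs) [0..<length xs]" using map_nth[of xs] by simp
  have t: "take p xs = map (nth xs) [0..<p]"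
    using assms by (subst xs) (simp add: take_map)
  have dr: "drop (Suc p) xs = map (nth xs) [Suc p..<length xs]"
    by (subst xs) (simp add: drop_map)
  have "prod_list (map f (take p xs @ drop (Suc p) xs)) = prod_list (map (\<lambda>q. f (xs ! q)) ([0..<p] @ [Suc p..<length xs]))"
    unfolding t dr by (simp add: o_def)
  also have "\<dots> = (\<Prod>q\<in>set ([0..<p] @ [Suc p..<length xs]). f (xs ! q))"
    by (subst prod.distinct_set_conv_list) auto
  also have "set ([0..<p] @ [Suc p..<length xs]) = {..<length xs} - {p}" using assms by auto
  finally show ?thesis .
qed

definition partial_fps :: "('k::field \<Rightarrow> 'K::field) \<Rightarrow> (nat list \<Rightarrow> 'k) \<Rightarrow> nat \<Rightarrow> nat \<Rightarrow> nat
    \<Rightarrow> (nat \<Rightarrow> nat \<Rightarrow> 'K) \<Rightarrow> 'K fps" where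
  "partial_fps emb a n r i x = (\<Sum>js\<in>idx n r. fps_const (emb (a js)) *
      (\<Sum>p<r. if js ! p = i then (\<Prod>q\<in>{..<r} - {p}. Abs_fps (x (js ! q))) else 0))"

lemma partial_eval_eq_fps: "partial_eval emb k a n r i x l = (if l \<le> k then fps_nth (partial_fps emb a n r i x) l else 0)"
proof (cases "l \<le> k")
  case False
  have "tprod k (map x js) l = 0" for js using False by (simp add: tprod_eq_fps)
  then show ?thesis unfolding partial_eval_def using False by (simp del: map_append cong: if_cong)
next
  case True
  have h: "prod_list (map (Abs_fps \<circ> x) (take p js)) * prod_list (map (Abs_fps \<circ> x) (drop (Suc p) js)) = (\<Prod>q\<in>{..<r} - {p}. Abs_fps (x (js ! q)))"
    if "js \<in> idx n r" "p < r" for js p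
    using prod_list_remove_nth[of p js "\<lambda>j. Abs_fps (x j)"] that by (simp add: idx_def o_def)
  show ?thesis
    unfolding partial_eval_def partial_fps_def using True
    by (auto simp: fps_sum_nth tprod_eq_fps h intro!: sum.cong)
qed

lemma sum_mult_partial_fps:
  assumes "r \<ge> 1"
  shows "(\<Sum>i\<le>n. Abs_fps (x1 i) * partial_fps emb a n r i x0) = polar r (multi_form (\<lambda>js. emb (a js)) n r) x0 x1"
proof -
  define Q where "Q js p = (\<Prod>q\<in>{..<r} - {p}. Abs_fps (x0 (js ! q)))" for js p
  have "(\<Sum>i\<le>n. Abs_fps (x1 i) * partial_fps emb a n r i x0) =
      (\<Sum>i\<le>n. \<Sum>js\<in>idx n r. \<Sum>p<r. fps_const (emb (a js)) * (if js ! p = i then Abs_fps (x1 i) * Q js p else 0))"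
    unfolding partial_fps_def Q_def by (simp add: sum_distrib_left algebra_simps if_distrib cong: if_cong)
  also have "\<dots> = (\<Sum>js\<in>idx n r. \<Sum>p<r. \<Sum>i\<le>n. fps_const (emb (a js)) * (if js ! p = i then Abs_fps (x1 i) * Q js p else 0))"
    by (subst sum.swap) (simp add: sum.swap[of _ "{..n}"])
  also have "\<dots> = (\<Sum>js\<in>idx n r. \<Sum>p<r. fps_const (emb (a js)) * (Abs_fps (x1 (js ! p)) * Q js p))"
  proof (rule sum.cong[OF refl], rule sum.cong[OF refl])
    fix js p assume js: "js \<in> idx n r" and p: "p \<in> {..<r}"
    then have "js ! p \<le> n" by (auto simp: idx_def dest!: nth_mem)
    then show "(\<Sum>i\<le>n. fps_const (emb (a js)) * (if js ! p = i then Abs_fps (x1 i) * Q js p else 0)) =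
        fps_const (emb (a js)) * (Abs_fps (x1 (js ! p)) * Q js p)"
      by (simp add: if_distrib[of "\<lambda>t. fps_const (emb (a js)) * t"] sum.delta' cong: if_cong)
  qed
  also have "\<dots> = (\<Sum>p<r. multi_form (\<lambda>js. emb (a js)) n r ((\<lambda>_. x0)(p := x1)))"
    by (subst sum.swap) (simp add: multi_form_fun_upd Q_def)
  also have "\<dots> = polar r (multi_form (\<lambda>js. emb (a js)) n r) x0 x1"
    unfolding polar_def by (intro sum.cong refl arg_cong[where f = "multi_form _ n r"]) (auto simp: fun_eq_iff)
  finally show ?thesis .
qed

lemma grad_dot_eq_fps:
  assumes "r \<ge> 1"
  shows "grad_dot emb k a n r x1 x0 l =
    (if l \<le> k then fps_nth (polar r (multi_form (\<lambda>js. emb (a js)) n r) x0 x1) l else 0)"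
proof -
  have "grad_dot emb k a n r x1 x0 l = (\<Sum>i\<le>n. if l \<le> k then fps_nth ((Abs_fps (x1 i) * partial_fps emb a n r i x0)) l else 0)"
    unfolding grad_dot_def by (intro sum.cong refl tmul_eq_fps) (simp add: partial_eval_eq_fps)
  also have "\<dots> = (if l \<le> k then fps_nth ((\<Sum>i\<le>n. Abs_fps (x1 i) * partial_fps emb a n r i x0)) l else 0)"
    by (simp add: fps_sum_nth)
  finally show ?thesis using sum_mult_partial_fps[OF assms, of x1 emb a n x0] by simp
qed

definition unit_vec :: "nat \<Rightarrow> (nat \<Rightarrow> 'a::zero) \<Rightarrow> nat \<Rightarrow> nat \<Rightarrow> 'a" where
  "unit_vec i y = (\<lambda>j. if j = i then y else (\<lambda>_. 0))"

lemma sum_idx_Suc_last: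
  assumes "i \<le> n"
  shows "(\<Sum>js\<in>idx n (Suc r). if js ! r = i then g js else 0) = (\<Sum>js\<in>idx n r. g (js @ [i]))"
proof -
  have "(\<Sum>js\<in>idx n (Suc r). if js ! r = i then g js else 0) = (\<Sum>js\<in>{js \<in> idx n (Suc r). js ! r = i}. g js)"
    by (simp add: sum.inter_filter[OF finite_idx])
  also have "{js \<in> idx n (Suc r). js ! r = i} = (\<lambda>js. js @ [i]) ` idx n r"
  proof (rule set_eqI, rule iffI)
    fix js assume js: "js \<in> {js \<in> idx n (Suc r). js ! r = i}"
    then have len: "length js = Suc r" by (simp add: idx_def)
    then have "js = butlast js @ [js ! r]"
      by (metis append_butlast_last_id diff_Suc_1 last_conv_nth list.size(3) nat.distinct(1))
    moreover have "butlast js \<in> idx n r" using js len by (auto simp: idx_def dest: in_set_butlastD)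
    ultimately show "js \<in> (\<lambda>js. js @ [i]) ` idx n r" using js by (metis (mono_tags, lifting) image_eqI mem_Collect_eq)
  next
    fix js assume "js \<in> (\<lambda>js. js @ [i]) ` idx n r"
    then show "js \<in> {js \<in> idx n (Suc r). js ! r = i}" using assms by (auto simp: idx_def nth_append)
  qed
  also have "(\<Sum>js\<in>(\<lambda>js. js @ [i]) ` idx n r. g js) = (\<Sum>js\<in>idx n r. g (js @ [i]))"
    by (subst sum.reindex) (auto simp: inj_on_def)
  finally show ?thesis .
qed

lemma multi_form_unit_vec_last:
  assumes "i \<le> n"
  shows "multi_form c n (Suc r) (z(r := unit_vec i y)) =
    (\<Sum>js\<in>idx n r. fps_const (c (js @ [i])) * (\<Prod>p<r. Abs_fps (z p (js ! p)))) * Abs_fps y"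
proof -
  have "multi_form c n (Suc r) (z(r := unit_vec i y)) = (\<Sum>js\<in>idx n (Suc r). if js ! r = i then
      fps_const (c js) * (Abs_fps y * (\<Prod>q\<in>{..<Suc r} - {r}. Abs_fps (z q (js ! q)))) else 0)"
  proof -
    have "multi_form c n (Suc r) (z(r := unit_vec i y)) = (\<Sum>js\<in>idx n (Suc r). fps_const (c js) *
        (Abs_fps (unit_vec i y (js ! r)) * (\<Prod>q\<in>{..<Suc r} - {r}. Abs_fps (z q (js ! q)))))"
      by (rule multi_form_fun_upd) simp
    also have "\<dots> = (\<Sum>js\<in>idx n (Suc r). if js ! r = i then
      fps_const (c js) * (Abs_fps y * (\<Prod>q\<in>{..<Suc r} - {r}. Abs_fps (z q (js ! q)))) else 0)"
      by (intro sum.cong refl) (auto simp: unit_vec_def fps_zero_def[symmetric])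
    finally show ?thesis .
  qed
  also have "\<dots> = (\<Sum>js\<in>idx n r. fps_const (c (js @ [i])) * (Abs_fps y * (\<Prod>q\<in>{..<Suc r} - {r}. Abs_fps (z q ((js @ [i]) ! q)))))"
    by (rule sum_idx_Suc_last[OF assms])
  also have "\<dots> = (\<Sum>js\<in>idx n r. fps_const (c (js @ [i])) * (\<Prod>p<r. Abs_fps (z p (js ! p)))) * Abs_fps y"
  proof -
    have "{..<Suc r} - {r} = {..<r}" by auto
    moreover have "(\<Prod>q<r. Abs_fps (z q ((js @ [i]) ! q))) = (\<Prod>q<r. Abs_fps (z q (js ! q)))" if "js \<in> idx n r" for js
      using that by (intro prod.cong refl) (auto simp: idx_def nth_append)
    ultimately show ?thesis by (simp add: sum_distrib_left sum_distrib_right algebra_simps)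
  qed
  finally show ?thesis .
qed
section \<open>Riemann--Roch spaces\<close>

lemma place_one: assumes "place emb v" shows "v 1 = 0"
proof -
  have "v (1 * 1) = v 1 + v 1" using assms unfolding place_def by (metis one_neq_zero)
  then show ?thesis by simp
qed

lemma place_uminus: assumes "place emb v" "f \<noteq> 0" shows "v (- f) = v f"
proof -
  have m: "\<And>a b. a \<noteq> 0 \<Longrightarrow> b \<noteq> 0 \<Longrightarrow> v (a * b) = v a + v b" using assms(1) unfolding place_def by blast
  have "v ((-1) * (-1)) = v (-1) + v (-1)" by (rule m) simp_all
  then have "v (-1) = 0" using place_one[OF assms(1)] by simp
  moreover have "v ((-1) * f) = v (-1) + v f" by (rule m) (use assms(2) in simp_all)
  ultimately show ?thesis by simp
qed

lemma RR_space_zero: "0 \<in> RR_space emb D"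
  by (simp add: RR_space_def)

lemma RR_space_add:
  assumes "f \<in> RR_space emb D" "g \<in> RR_space emb D"
  shows "f + g \<in> RR_space emb D"
  unfolding RR_space_def
proof (cases "f = 0 \<or> g = 0 \<or> f + g = 0")
  case True then show "f + g \<in> {f. f = 0 \<or> (\<forall>v. place emb v \<longrightarrow> - D v \<le> v f)}"
    using assms by (auto simp: RR_space_def)
next
  case False
  show "f + g \<in> {f. f = 0 \<or> (\<forall>v. place emb v \<longrightarrow> - D v \<le> v f)}"
  proof (simp, intro disjI2 allI impI)
    fix v assume pv: "place emb v"
    then have "min (v f) (v g) \<le> v (f + g)" using False unfolding place_def by blast
    moreover have "- D v \<le> v f" "- D v \<le> v g" using assms False pv by (auto simp: RR_space_def)
    ultimately show "- D v \<le> v (f + g)" by linarith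
  qed
qed

lemma RR_space_uminus:
  assumes "f \<in> RR_space emb D" shows "- f \<in> RR_space emb D"
  using assms place_uminus by (fastforce simp: RR_space_def)

lemma RR_space_diff:
  assumes "f \<in> RR_space emb D" "g \<in> RR_space emb D" shows "f - g \<in> RR_space emb D"
  using RR_space_add[OF assms(1) RR_space_uminus[OF assms(2)]] by simp

lemma RR_space_sum: "finite I \<Longrightarrow> (\<And>i. i \<in> I \<Longrightarrow> f i \<in> RR_space emb D) \<Longrightarrow> (\<Sum>i\<in>I. f i) \<in> RR_space emb D"
  by (induction I rule: finite_induct) (auto intro: RR_space_add RR_space_zero)

lemma RR_space_mult:
  assumes "f \<in> RR_space emb D1" "g \<in> RR_space emb D2" "\<And>v. D3 v = D1 v + D2 v"
  shows "f * g \<in> RR_space emb D3"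
proof (cases "f = 0 \<or> g = 0")
  case True then show ?thesis by (auto simp: RR_space_def)
next
  case False
  have "- D3 v \<le> v (f * g)" if pv: "place emb v" for v
  proof -
    have "v (f * g) = v f + v g" using pv False unfolding place_def by blast
    moreover have "- D1 v \<le> v f" "- D2 v \<le> v g" using assms False pv by (auto simp: RR_space_def)
    ultimately show ?thesis using assms(3)[of v] by linarith
  qed
  then show ?thesis by (simp add: RR_space_def)
qed

lemma const_emb_of_nat: "const_emb emb \<Longrightarrow> emb (of_nat N) = of_nat N"
  by (induction N) (simp_all add: const_emb_def)

lemma const_emb_nonzero: assumes "const_emb emb" "c \<noteq> 0" shows "emb c \<noteq> 0"
proof
  assume "emb c = 0"
  then have "emb (c * inverse c) = 0" using assms(1) by (simp add: const_emb_def)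
  then show False using assms by (simp add: const_emb_def)
qed

lemma RR_space_emb_mult:
  assumes "const_emb emb" "f \<in> RR_space emb D"
  shows "emb c * f \<in> RR_space emb D"
proof (cases "c = 0")
  case True then show ?thesis using assms(1) by (simp add: const_emb_def RR_space_def)
next
  case False
  have "emb c \<in> RR_space emb (\<lambda>_. 0)"
    using const_emb_nonzero[OF assms(1) False] False by (auto simp: RR_space_def place_def)
  then show ?thesis using RR_space_mult[of "emb c" emb "\<lambda>_. 0" f D D] assms(2) by simp
qed

lemma RR_space_one: "1 \<in> RR_space emb (\<lambda>_. 0)"
  by (auto simp: RR_space_def place_one)

lemma RR_space_of_nat_mult: "f \<in> RR_space emb D \<Longrightarrow> of_nat N * f \<in> RR_space emb D"
  by (induction N) (auto simp: algebra_simps intro: RR_space_add RR_space_zero)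

definition fps_coeffs_in :: "'a set \<Rightarrow> 'a fps \<Rightarrow> bool" where
  "fps_coeffs_in S f \<longleftrightarrow> (\<forall>l. fps_nth f l \<in> S)"

lemma fps_coeffs_in_diff: "fps_coeffs_in (RR_space emb D) f \<Longrightarrow> fps_coeffs_in (RR_space emb D) g \<Longrightarrow> fps_coeffs_in (RR_space emb D) (f - g)"
  by (simp add: fps_coeffs_in_def RR_space_diff)

lemma fps_coeffs_in_sum: "finite I \<Longrightarrow> (\<And>i. i \<in> I \<Longrightarrow> fps_coeffs_in (RR_space emb D) (f i)) \<Longrightarrow> fps_coeffs_in (RR_space emb D) (\<Sum>i\<in>I. f i)"
  by (simp add: fps_coeffs_in_def fps_sum_nth RR_space_sum)

lemma fps_coeffs_in_mult:
  assumes "fps_coeffs_in (RR_space emb D1) f" "fps_coeffs_in (RR_space emb D2) g" "\<And>v. D3 v = D1 v + D2 v"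
  shows "fps_coeffs_in (RR_space emb D3) (f * g)"
  unfolding fps_coeffs_in_def fps_mult_nth
  using assms by (auto simp: fps_coeffs_in_def intro!: RR_space_sum RR_space_mult)

lemma fps_coeffs_in_one: "fps_coeffs_in (RR_space emb (\<lambda>_. 0)) 1"
  by (simp add: fps_coeffs_in_def RR_space_one RR_space_zero)

lemma fps_coeffs_in_const_emb_mult:
  assumes "const_emb emb" "fps_coeffs_in (RR_space emb D) f"
  shows "fps_coeffs_in (RR_space emb D) (fps_const (emb c) * f)"
  using assms by (auto simp: fps_coeffs_in_def intro: RR_space_emb_mult)

lemma fps_coeffs_in_of_nat_mult: "fps_coeffs_in (RR_space emb D) f \<Longrightarrow> fps_coeffs_in (RR_space emb D) (of_nat N * f)"
proof -
  assume "fps_coeffs_in (RR_space emb D) f"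
  moreover have "of_nat N * f = fps_const (of_nat N) * f" by (simp add: fps_of_nat)
  ultimately show ?thesis by (simp add: fps_coeffs_in_def RR_space_of_nat_mult)
qed

lemma fps_coeffs_in_X_power_mult: "fps_coeffs_in (RR_space emb D) f \<Longrightarrow> fps_coeffs_in (RR_space emb D) (fps_X ^ s * f)"
  by (simp add: fps_coeffs_in_def fps_X_power_mult_nth RR_space_zero)

definition entries_in :: "'a set \<Rightarrow> (nat \<Rightarrow> nat \<Rightarrow> 'a) \<Rightarrow> bool" where
  "entries_in S x \<longleftrightarrow> (\<forall>j l. x j l \<in> S)"

lemma fps_coeffs_in_prod:
  assumes "\<And>p. p < r \<Longrightarrow> fps_coeffs_in (RR_space emb D) (F p)"
  shows "fps_coeffs_in (RR_space emb (div_scale r D)) (\<Prod>p<r. F p)"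
  using assms
proof (induction r)
  case 0 then show ?case using fps_coeffs_in_one[of emb] by (simp add: div_scale_def)
next
  case (Suc r)
  have "fps_coeffs_in (RR_space emb (div_scale (Suc r) D)) ((\<Prod>p<r. F p) * F r)"
    by (rule fps_coeffs_in_mult[of emb "div_scale r D" _ D]) (use Suc in \<open>auto simp: div_scale_def algebra_simps\<close>)
  then show ?case by simp
qed

lemma fps_coeffs_in_multi_form:
  assumes "const_emb emb" "\<And>p. p < r \<Longrightarrow> entries_in (RR_space emb D) (z p)"
  shows "fps_coeffs_in (RR_space emb (div_scale r D)) (multi_form (\<lambda>js. emb (a js)) n r z)"
  unfolding multi_form_def
proof (intro fps_coeffs_in_sum finite_idx fps_coeffs_in_const_emb_mult[OF assms(1)] fps_coeffs_in_prod)
  fix js p assume "p < r"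
  then show "fps_coeffs_in (RR_space emb D) (Abs_fps (z p (js ! p)))"
    using assms(2) by (simp add: fps_coeffs_in_def entries_in_def)
qed


section \<open>Truncated vectors\<close>

lemma mem_tvecs_iff:
  "0 \<in> V \<Longrightarrow> x \<in> tvecs V k N \<longleftrightarrow> (\<forall>j l. x j l \<in> V \<and> (N \<le> j \<or> k < l \<longrightarrow> x j l = 0))"
  by (auto simp: tvecs_def trunc_def fun_eq_iff) (metis not_le)+

text \<open>Every \<open>x\<close> of \<open>t\<close>-degree at most \<open>m\<close> is uniquely \<open>u + t\<^sup>s h\<close> with \<open>u\<close> of degree \<open>< s\<close>.\<close>

lemma sum_tvecs_split:
  assumes "0 \<in> V" "1 \<le> s" "s \<le> m"
  shows "(\<Sum>x\<in>tvecs V m N. f x) = (\<Sum>u\<in>tvecs V (s - 1) N. \<Sum>h\<in>tvecs V (m - s) N. f (u + shift_vec s h))"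
proof -
  define lo where "lo x = (\<lambda>j l. if l < s then x j l else 0)" for x :: "nat \<Rightarrow> nat \<Rightarrow> 'a"
  define hi where "hi x = (\<lambda>j l. if l \<le> m - s then x j (l + s) else 0)" for x :: "nat \<Rightarrow> nat \<Rightarrow> 'a"
  have recombine: "lo x + shift_vec s (hi x) = x" if "x \<in> tvecs V m N" for x
    using that assms by (auto simp: mem_tvecs_iff lo_def hi_def shift_vec_def fun_eq_iff)
  have "(\<Sum>x\<in>tvecs V m N. f x) = (\<Sum>(u, h)\<in>tvecs V (s - 1) N \<times> tvecs V (m - s) N. f (u + shift_vec s h))"
  proof (rule sum.reindex_bij_witness[where j = "\<lambda>x. (lo x, hi x)" and i = "\<lambda>(u, h). u + shift_vec s h"])
    fix x assume x: "x \<in> tvecs V m N"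
    then show "(case (lo x, hi x) of (u, h) \<Rightarrow> u + shift_vec s h) = x"
      "(case (lo x, hi x) of (u, h) \<Rightarrow> f (u + shift_vec s h)) = f x"
      by (simp_all add: recombine)
    show "(lo x, hi x) \<in> tvecs V (s - 1) N \<times> tvecs V (m - s) N"
      using x assms by (auto simp: mem_tvecs_iff lo_def hi_def)
  qed (use assms in \<open>auto simp: mem_tvecs_iff lo_def hi_def shift_vec_def fun_eq_iff\<close>)
  then show ?thesis by (simp add: sum.cartesian_product)
qed

lemma tvecs_entries_in: "0 \<in> V \<Longrightarrow> x \<in> tvecs V k N \<Longrightarrow> entries_in V x"
  by (auto simp: tvecs_def trunc_def entries_in_def) (metis not_le)

lemma add_subgroup_tvecs:
  assumes "0 \<in> V" "\<And>x y. x \<in> V \<Longrightarrow> y \<in> V \<Longrightarrow> x + y \<in> V" "\<And>x. x \<in> V \<Longrightarrow> - x \<in> V"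
  shows "add_subgroup (tvecs V k N)"
  using assms by (auto simp: add_subgroup_def tvecs_def trunc_def zero_fun_def)

lemma tvecs_mono: "0 \<in> V \<Longrightarrow> k \<le> k' \<Longrightarrow> tvecs V k N \<subseteq> tvecs V k' N"
  by (auto simp: tvecs_def trunc_def) (metis le_trans not_le)

lemma card_tvecs:
  fixes V :: "'a::field set"
  assumes "finite V" "0 \<in> V"
  shows "finite (tvecs V k N) \<and> card (tvecs V k N) = card V ^ ((k + 1) * N)"
proof -
  define A where "A = {..<N} \<times> {..k}"
  define toF where "toF x = (\<lambda>jl\<in>A. x (fst jl) (snd jl))" for x :: "nat \<Rightarrow> nat \<Rightarrow> 'a"
  define ofF where "ofF g = (\<lambda>j l. if j < N \<and> l \<le> k then g (j, l) else (0::'a))" for g :: "nat \<times> nat \<Rightarrow> 'a"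
  have bij: "bij_betw toF (tvecs V k N) (PiE A (\<lambda>_. V))"
  proof (rule bij_betw_byWitness[where f' = ofF])
    show "\<forall>x\<in>tvecs V k N. ofF (toF x) = x"
      by (auto simp: tvecs_def trunc_def ofF_def toF_def A_def fun_eq_iff) (metis not_le)+
    show "\<forall>g\<in>PiE A (\<lambda>_. V). toF (ofF g) = g"
      by (auto simp: ofF_def toF_def A_def fun_eq_iff PiE_def extensional_def)
    show "toF ` tvecs V k N \<subseteq> PiE A (\<lambda>_. V)"
    proof
      fix g assume "g \<in> toF ` tvecs V k N"
      then obtain x where x: "x \<in> tvecs V k N" "g = toF x" by blast
      show "g \<in> PiE A (\<lambda>_. V)" unfolding x(2) toF_def
        by (subst restrict_PiE_iff) (use x(1) in \<open>auto simp: tvecs_def trunc_def A_def\<close>)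
    qed
    show "ofF ` PiE A (\<lambda>_. V) \<subseteq> tvecs V k N"
      using assms(2) by (auto simp: tvecs_def trunc_def ofF_def A_def PiE_def Pi_def)
  qed
  have fin: "finite (PiE A (\<lambda>_. V))" using assms(1) by (simp add: A_def finite_PiE)
  have "card (PiE A (\<lambda>_. V)) = card V ^ ((k + 1) * N)"
    by (simp add: card_PiE A_def card_cartesian_product mult.commute)
  then show ?thesis using bij fin bij_betw_finite bij_betw_same_card by metis
qed


lemma glob_gen_add_shift_vec: "1 \<le> s \<Longrightarrow> glob_gen emb D n (u + shift_vec s h) = glob_gen emb D n u"
  by (simp add: glob_gen_def shift_vec_def)

lemma infinite_tvecs:
  fixes V :: "'a::field set"
  assumes "infinite V" "0 \<in> V"
  shows "infinite (tvecs V k (Suc n))"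
proof
  assume fin: "finite (tvecs V k (Suc n))"
  define f where "f y = (\<lambda>j::nat. \<lambda>l::nat. if j = 0 \<and> l = 0 then y else 0)" for y :: 'a
  have "inj_on f V" by (auto simp: inj_on_def f_def fun_eq_iff)
  moreover have "f ` V \<subseteq> tvecs V k (Suc n)" using assms(2) by (auto simp: f_def tvecs_def trunc_def)
  ultimately show False using fin assms(1) by (metis finite_subset inj_on_finite)
qed

section \<open>Pairings and characters\<close>

lemma nontriv_add_char_cases:
  fixes \<psi> :: "'k::{finite,field} \<Rightarrow> complex"
  assumes "nontriv_add_char \<psi>"
  shows "(\<forall>x. \<psi> x = 0) \<or> (add_char \<psi> \<and> (\<exists>x. \<psi> x \<noteq> 1))"
proof (cases "\<psi> 0 = 0")
  case True
  then have "\<psi> x = 0" for x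
    using assms unfolding nontriv_add_char_def by (metis add.right_neutral mult_zero_right)
  then show ?thesis by blast
next
  case False
  have mult: "\<psi> (x + y) = \<psi> x * \<psi> y" for x y using assms by (simp add: nontriv_add_char_def)
  have \<psi>0: "\<psi> 0 = 1" using mult[of 0 0] False by simp
  have pow: "\<psi> (of_nat N * x) = \<psi> x ^ N" for N x by (induction N) (simp_all add: \<psi>0 mult algebra_simps)
  have "CHAR('k) > 0" by (rule finite_imp_CHAR_pos) simp
  have norm: "cmod (\<psi> x) = 1" for x
  proof -
    have "cmod (\<psi> x) ^ CHAR('k) = 1 ^ CHAR('k)"
      using pow[of "CHAR('k)" x] \<psi>0 by (simp flip: norm_power)
    then show ?thesis by (rule power_eq_imp_eq_base) (use \<open>CHAR('k) > 0\<close> in auto)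
  qed
  have "cnj (\<psi> x) = \<psi> (- x)" for x
  proof -
    have "\<psi> x * cnj (\<psi> x) = \<psi> x * \<psi> (- x)"
      using norm[of x] mult[of x "- x"] \<psi>0 by (simp add: complex_norm_square[symmetric])
    moreover have "\<psi> x \<noteq> 0" using norm[of x] by auto
    ultimately show ?thesis by simp
  qed
  then have "add_char \<psi>" using mult \<psi>0 by (simp add: add_char_def)
  then show ?thesis using assms by (simp add: nontriv_add_char_def)
qed

lemma psi_m_add_char:
  assumes "add_char \<psi>"
  shows "psi_m \<psi> m c = \<psi> (\<Sum>i\<le>m. c i)"
proof (induction m)
  case 0 then show ?case by (simp add: psi_m_def)
next
  case (Suc m)
  then show ?case using assms by (simp add: psi_m_def add_char_def)
qed

definition total_pairing :: "(nat \<Rightarrow> 'K \<Rightarrow> 'k::field) \<Rightarrow> nat \<Rightarrow> 'K fps \<Rightarrow> 'k" where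
  "total_pairing \<gamma> k f = (\<Sum>l\<le>k. pairing \<gamma> (fps_nth f) l)"

lemma pairing_cong: "(\<And>j. j \<le> l \<Longrightarrow> y j = y' j) \<Longrightarrow> pairing \<gamma> y l = pairing \<gamma> y' l"
  unfolding pairing_def by (intro sum.cong refl) auto

lemma total_pairing_cong: "(\<And>l. l \<le> k \<Longrightarrow> fps_nth f l = fps_nth g l) \<Longrightarrow> total_pairing \<gamma> k f = total_pairing \<gamma> k g"
  unfolding total_pairing_def by (intro sum.cong refl pairing_cong) auto

lemma tduals_zero:
  assumes "\<gamma> \<in> tduals emb V m" "0 \<in> V"
  shows "\<gamma> i 0 = 0"
proof (cases "i \<le> m")
  case True
  then have "\<gamma> i (0 + 0) = \<gamma> i 0 + \<gamma> i 0" using assms unfolding tduals_def lin_fun_def by blast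
  then show ?thesis by (metis add.right_neutral add_left_cancel)
next
  case False then show ?thesis using assms by (auto simp: tduals_def)
qed

lemma tduals_add:
  assumes "\<gamma> \<in> tduals emb V m" "x \<in> V" "y \<in> V"
  shows "\<gamma> i (x + y) = \<gamma> i x + \<gamma> i y"
  using assms by (cases "i \<le> m") (auto simp: tduals_def lin_fun_def)

lemma tduals_emb:
  assumes "\<gamma> \<in> tduals emb V m" "x \<in> V"
  shows "\<gamma> i (emb c * x) = c * \<gamma> i x"
  using assms by (cases "i \<le> m") (auto simp: tduals_def lin_fun_def)

lemma total_pairing_add:
  assumes "\<gamma> \<in> tduals emb V m" "fps_coeffs_in V f" "fps_coeffs_in V g"
  shows "total_pairing \<gamma> k (f + g) = total_pairing \<gamma> k f + total_pairing \<gamma> k g"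
  unfolding total_pairing_def pairing_def using assms
  by (simp add: fps_coeffs_in_def tduals_add sum.distrib)

lemma total_pairing_emb_mult:
  assumes "\<gamma> \<in> tduals emb V m" "fps_coeffs_in V f"
  shows "total_pairing \<gamma> k (fps_const (emb c) * f) = c * total_pairing \<gamma> k f"
  unfolding total_pairing_def pairing_def using assms
  by (simp add: fps_coeffs_in_def tduals_emb sum_distrib_left)

lemma pairing_shift:
  assumes "\<gamma> \<in> tduals emb V m" "0 \<in> V"
  shows "pairing \<gamma> (fps_nth (fps_X ^ s * f)) l = (if l < s then 0 else pairing \<gamma> (fps_nth f) (l - s))"
proof (cases "l < s")
  case True
  then show ?thesis using tduals_zero[OF assms]
    by (auto simp: pairing_def fps_X_power_mult_nth intro!: sum.neutral)
next
  case False
  have "pairing \<gamma> (fps_nth (fps_X ^ s * f)) l = (\<Sum>i\<le>l. if l - i < s then 0 else \<gamma> i (fps_nth f (l - i - s)))"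
    unfolding pairing_def using tduals_zero[OF assms]
    by (intro sum.cong refl) (simp add: fps_X_power_mult_nth)
  also have "\<dots> = (\<Sum>i\<in>{..l - s} \<union> {l - s<..l}. if l - i < s then 0 else \<gamma> i (fps_nth f (l - i - s)))"
    by (intro sum.cong refl) auto
  also have "\<dots> = (\<Sum>i\<le>l - s. if l - i < s then 0 else \<gamma> i (fps_nth f (l - i - s)))
      + (\<Sum>i\<in>{l - s<..l}. if l - i < s then 0 else \<gamma> i (fps_nth f (l - i - s)))"
    by (rule sum.union_disjoint) auto
  also have "(\<Sum>i\<in>{l - s<..l}. if l - i < s then 0 else \<gamma> i (fps_nth f (l - i - s))) = 0"
    by (intro sum.neutral) auto
  also have "(\<Sum>i\<le>l - s. if l - i < s then 0 else \<gamma> i (fps_nth f (l - i - s))) = pairing \<gamma> (fps_nth f) (l - s)"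
    unfolding pairing_def using False by (intro sum.cong refl) (auto simp: add.commute)
  finally show ?thesis using False by simp
qed

lemma total_pairing_shift:
  assumes "\<gamma> \<in> tduals emb V m" "0 \<in> V" "s \<le> k"
  shows "total_pairing \<gamma> k (fps_X ^ s * f) = total_pairing \<gamma> (k - s) f"
proof -
  have "total_pairing \<gamma> k (fps_X ^ s * f) = (\<Sum>l\<le>k. if l < s then 0 else pairing \<gamma> (fps_nth f) (l - s))"
    unfolding total_pairing_def by (simp add: pairing_shift[OF assms(1,2)])
  also have "\<dots> = (\<Sum>l\<in>{s..k}. pairing \<gamma> (fps_nth f) (l - s))"
    by (rule sum.mono_neutral_cong_right) auto
  also have "\<dots> = (\<Sum>l\<in>{0..k - s}. pairing \<gamma> (fps_nth f) l)"
  proof -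
    have e: "{s..k} = {0 + s..(k - s) + s}" using assms(3) by simp
    show ?thesis unfolding e sum.shift_bounds_cl_nat_ivl by simp
  qed
  also have "\<dots> = total_pairing \<gamma> (k - s) f" unfolding total_pairing_def by (simp add: atLeast0AtMost)
  finally show ?thesis .
qed

lemma partial_sums_zero_imp_zero:
  fixes g :: "nat \<Rightarrow> 'a::ab_group_add"
  assumes "\<And>t. t \<le> k \<Longrightarrow> (\<Sum>l\<le>k - t. g l) = 0" "l \<le> k"
  shows "g l = 0"
proof (cases l)
  case 0
  then show ?thesis using assms(1)[of k] by simp
next
  case (Suc l')
  have "(\<Sum>i\<le>l. g i) = 0" using assms(1)[of "k - l"] assms(2) by simp
  moreover have "(\<Sum>i\<le>l'. g i) = 0" using assms(1)[of "k - l'"] assms(2) Suc by simp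
  ultimately show ?thesis using Suc by simp
qed

lemma total_pairing_diff:
  assumes "\<gamma> \<in> tduals emb (RR_space emb D) m"
    "fps_coeffs_in (RR_space emb D) f" "fps_coeffs_in (RR_space emb D) g"
  shows "total_pairing \<gamma> k (f - g) = total_pairing \<gamma> k f - total_pairing \<gamma> k g"
  using total_pairing_add[OF assms(1) fps_coeffs_in_diff[OF assms(2,3)] assms(3)] by simp

lemma eq_0_if_trivial_on_multiples:
  assumes "\<exists>x. \<psi> x \<noteq> 1" "\<And>c. \<psi> (c * v) = 1"
  shows "v = (0::'k::field)"
proof (rule ccontr)
  assume "v \<noteq> 0"
  obtain x where "\<psi> x \<noteq> 1" using assms(1) by blast
  moreover have "\<psi> (x / v * v) = 1" by (rule assms(2))
  ultimately show False using \<open>v \<noteq> 0\<close> by simp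
qed

section \<open>The exponential sum as a character sum over truncated vectors\<close>

locale exp_sum_setting =
  fixes emb :: "'k::{finite,field} \<Rightarrow> 'K::field" and \<psi> :: "'k \<Rightarrow> complex"
    and D :: "('K \<Rightarrow> int) \<Rightarrow> int" and a :: "nat list \<Rightarrow> 'k" and n d m :: nat
    and \<alpha> \<beta> :: "nat \<Rightarrow> 'K \<Rightarrow> 'k"
  assumes const_emb: "const_emb emb" and add_char: "add_char \<psi>" and nontriv: "\<exists>x. \<psi> x \<noteq> 1"
    and d_ge_2: "2 \<le> d" and sym: "sym_coeffs a"
    and \<alpha>_dual: "\<alpha> \<in> tduals emb (RR_space emb (div_scale d D)) m"
    and \<beta>_dual: "\<beta> \<in> tduals emb (RR_space emb (div_scale d D)) m"
    and finite_P: "finite (RR_space emb D)"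
begin

abbreviation "P \<equiv> RR_space emb D"
abbreviation "V \<equiv> RR_space emb (div_scale d D)"
abbreviation "M \<equiv> multi_form (\<lambda>js. emb (a js)) n d"

definition F_fps where "F_fps x = M (\<lambda>_. x)"
definition G_fps where "G_fps x1 x0 = polar d M x0 x1"
definition phase where "phase x0 x1 = total_pairing \<alpha> m (F_fps x0) + total_pairing \<beta> m (G_fps x1 x0)"

lemma add_subgroup_tvecs_P: "add_subgroup (tvecs P k N)"
  by (rule add_subgroup_tvecs) (auto intro: RR_space_zero RR_space_add RR_space_uminus)

lemma finite_tvecs_P: "finite (tvecs P k N)"
  using card_tvecs[OF finite_P RR_space_zero] by blast

lemma card_tvecs_P: "card (tvecs P k N) = card P ^ ((k + 1) * N)"
  using card_tvecs[OF finite_P RR_space_zero] by blast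

lemma entries_in_P: "x \<in> tvecs P k N \<Longrightarrow> entries_in P x"
  by (rule tvecs_entries_in[OF RR_space_zero])

lemma fps_coeffs_in_M: "(\<And>p. p < d \<Longrightarrow> entries_in P (z p)) \<Longrightarrow> fps_coeffs_in V (M z)"
  by (rule fps_coeffs_in_multi_form[OF const_emb])

lemma multilinear_M: "multilinear d M"
  by (rule multilinear_multi_form)

lemma perm_invariant_M: "perm_invariant d M"
proof (rule perm_invariant_multi_form)
  fix js js' :: "nat list" assume "mset js = mset js'"
  then show "emb (a js) = emb (a js')" using sym unfolding sym_coeffs_def by metis
qed

lemma M_snoc:
  assumes "length hs = d - 1"
  shows "M (\<lambda>q. (hs @ [u]) ! q) = M ((\<lambda>q. hs ! q)(d - 1 := u))"
  by (rule multilinear_cong[OF multilinear_M]) (use assms d_ge_2 in \<open>auto simp: nth_append\<close>)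

lemma M_snoc_add:
  assumes "length hs = d - 1"
  shows "M (\<lambda>q. (hs @ [u + w]) ! q) = M (\<lambda>q. (hs @ [u]) ! q) + M (\<lambda>q. (hs @ [w]) ! q)"
  unfolding M_snoc[OF assms] using multilinear_add[OF multilinear_M, of "d - 1"] d_ge_2 by simp

lemma fps_coeffs_in_F_fps: "x \<in> tvecs P k N \<Longrightarrow> fps_coeffs_in V (F_fps x)"
  unfolding F_fps_def by (rule fps_coeffs_in_M) (simp add: entries_in_P)

lemma fps_coeffs_in_G_fps: "x1 \<in> tvecs P k N \<Longrightarrow> x0 \<in> tvecs P k' N' \<Longrightarrow> fps_coeffs_in V (G_fps x1 x0)"
  unfolding G_fps_def polar_def by (intro fps_coeffs_in_sum fps_coeffs_in_M) (auto simp: entries_in_P)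

lemma S_sum_eq_phase:
  "S_sum emb \<psi> D a n d m \<alpha> \<beta> =
    (\<Sum>x0\<in>{x \<in> tvecs P m (Suc n). glob_gen emb D n x}. \<Sum>x1\<in>tvecs P m (Suc n). \<psi> (phase x0 x1))"
  unfolding S_sum_def
proof (intro sum.cong refl)
  fix x0 x1
  have "pairing \<alpha> (form_eval emb m a n d x0) l = pairing \<alpha> (fps_nth (F_fps x0)) l"
    "pairing \<beta> (grad_dot emb m a n d x1 x0) l = pairing \<beta> (fps_nth (G_fps x1 x0)) l" if "l \<le> m" for l
    using that d_ge_2 by (auto intro!: pairing_cong simp: form_eval_eq_fps F_fps_def grad_dot_eq_fps G_fps_def)
  then show "psi_m \<psi> m (\<lambda>l. pairing \<alpha> (form_eval emb m a n d x0) l + pairing \<beta> (grad_dot emb m a n d x1 x0) l)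
      = \<psi> (phase x0 x1)"
    by (simp add: psi_m_add_char[OF add_char] phase_def total_pairing_def sum.distrib)
qed

definition N_set where
  "N_set \<gamma> k = {ys :: nat \<Rightarrow> nat \<Rightarrow> nat \<Rightarrow> 'K.
      (\<forall>p<d - 1. ys p \<in> tvecs P k (Suc n)) \<and>
      (\<forall>p\<ge>d - 1. ys p = (\<lambda>_ _. 0)) \<and>
      (\<forall>i\<le>n. \<forall>y\<in>trunc P k. \<forall>l\<le>k.
          pairing \<gamma> (tmul k (Psi emb k a n d i ys) y) l = 0)}"

lemma N_count_eq_card_N_set: "N_count emb D a n d k \<gamma> = card (N_set \<gamma> k)"
  by (simp add: N_count_def N_set_def)

definition pad_args :: "(nat \<Rightarrow> nat \<Rightarrow> 'K) list \<Rightarrow> nat \<Rightarrow> nat \<Rightarrow> nat \<Rightarrow> 'K" where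
  "pad_args hs = (\<lambda>p. if p < d - 1 then hs ! p else (\<lambda>_ _. 0))"

lemma N_set_subset_pad_args: "N_set \<gamma> k \<subseteq> pad_args ` lists_of (tvecs P k (Suc n)) (d - 1)"
proof
  fix ys assume ys: "ys \<in> N_set \<gamma> k"
  then have "pad_args (map ys [0..<d - 1]) = ys" by (auto simp: pad_args_def N_set_def fun_eq_iff)
  moreover have "map ys [0..<d - 1] \<in> lists_of (tvecs P k (Suc n)) (d - 1)"
    using ys by (auto simp: lists_of_def N_set_def)
  ultimately show "ys \<in> pad_args ` lists_of (tvecs P k (Suc n)) (d - 1)" by (metis image_eqI)
qed

lemma finite_N_set: "finite (N_set \<gamma> k)"
  by (rule finite_surj[OF finite_lists_of[OF finite_tvecs_P] N_set_subset_pad_args])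

lemma inj_on_pad_args: "inj_on pad_args (lists_of Y (d - 1))"
proof (rule inj_onI)
  fix hs hs' assume "hs \<in> lists_of Y (d - 1)" "hs' \<in> lists_of Y (d - 1)" "pad_args hs = pad_args hs'"
  then show "hs = hs'" by (metis (mono_tags) lists_of_def mem_Collect_eq nth_equalityI pad_args_def)
qed

lemma sum_of_bool_pad_args_le:
  assumes "finite Y"
  shows "(\<Sum>hs\<in>lists_of Y (d - 1). of_bool (pad_args hs \<in> N_set \<gamma> k)) \<le> real (card (N_set \<gamma> k))"
proof -
  have "(\<Sum>hs\<in>lists_of Y (d - 1). of_bool (pad_args hs \<in> N_set \<gamma> k))
      = real (card {hs \<in> lists_of Y (d - 1). pad_args hs \<in> N_set \<gamma> k})"
    using finite_lists_of[OF assms] by (simp add: of_bool_def sum.If_cases Int_def)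
  also have "card {hs \<in> lists_of Y (d - 1). pad_args hs \<in> N_set \<gamma> k} \<le> card (N_set \<gamma> k)"
    by (rule card_inj_on_le[OF inj_on_subset[OF inj_on_pad_args] _ finite_N_set]) auto
  finally show ?thesis by simp
qed

lemma entries_in_unit_vec: "y \<in> trunc P k \<Longrightarrow> entries_in P (unit_vec i y)"
  using RR_space_zero by (auto simp: entries_in_def unit_vec_def trunc_def) (metis not_le)

lemma unit_vec_tvecs: "y \<in> trunc P k \<Longrightarrow> i \<le> n \<Longrightarrow> unit_vec i y \<in> tvecs P k (Suc n)"
  by (auto simp: tvecs_def unit_vec_def trunc_def zero_fun_def RR_space_zero)

text \<open>\<open>lin_phase \<gamma> s hs (unit_vec i y)\<close> is \<open>\<gamma>(\<Psi>\<^sub>i(hs) y)\<close> of the definition of \<open>N\<^sup>(\<^sup>k\<^sup>)(\<gamma>)\<close>,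
  shifted by \<open>t\<^sup>s\<close> and summed over all coefficients.\<close>

definition lin_phase :: "(nat \<Rightarrow> 'K \<Rightarrow> 'k) \<Rightarrow> nat \<Rightarrow> (nat \<Rightarrow> nat \<Rightarrow> 'K) list \<Rightarrow> (nat \<Rightarrow> nat \<Rightarrow> 'K) \<Rightarrow> 'k" where
  "lin_phase \<gamma> s hs u = total_pairing \<gamma> m (fps_X ^ s * (of_nat (fact d) * M (\<lambda>q. (hs @ [u]) ! q)))"

lemma fps_coeffs_in_M_snoc:
  assumes "set hs \<subseteq> tvecs P k N" "length hs = d - 1" "entries_in P u"
  shows "fps_coeffs_in V (fps_X ^ s * (of_nat (fact d) * M (\<lambda>q. (hs @ [u]) ! q)))"
proof (intro fps_coeffs_in_X_power_mult fps_coeffs_in_of_nat_mult fps_coeffs_in_M)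
  fix p assume "p < d"
  then show "entries_in P ((hs @ [u]) ! p)"
    using assms(2,3) subsetD[OF assms(1) nth_mem[of p hs]]
    by (cases "p < d - 1") (auto simp: nth_append intro: entries_in_P)
qed

lemma lin_phase_add:
  assumes "\<gamma> \<in> tduals emb V m" "set hs \<subseteq> tvecs P k N" "length hs = d - 1" "entries_in P u" "entries_in P w"
  shows "lin_phase \<gamma> s hs (u + w) = lin_phase \<gamma> s hs u + lin_phase \<gamma> s hs w"
  unfolding lin_phase_def M_snoc_add[OF assms(3)] distrib_left
  by (rule total_pairing_add[OF assms(1) fps_coeffs_in_M_snoc[OF assms(2,3,4)] fps_coeffs_in_M_snoc[OF assms(2,3,5)]])

lemma lin_phase_scale_unit_vec:
  assumes "\<gamma> \<in> tduals emb V m" "set hs \<subseteq> tvecs P k' N" "length hs = d - 1" "y \<in> trunc P k"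
  shows "lin_phase \<gamma> s hs (unit_vec i (\<lambda>l. emb c * y l)) = c * lin_phase \<gamma> s hs (unit_vec i y)"
proof -
  have "unit_vec i (\<lambda>l. emb c * y l) = scale_vec (emb c) (unit_vec i y)"
    by (auto simp: unit_vec_def scale_vec_def fun_eq_iff)
  then have "M (\<lambda>q. (hs @ [unit_vec i (\<lambda>l. emb c * y l)]) ! q) = fps_const (emb c) * M (\<lambda>q. (hs @ [unit_vec i y]) ! q)"
    using multi_form_scale_vec[of "d - 1" d] d_ge_2 by (simp add: M_snoc[OF assms(3)])
  then show ?thesis
    unfolding lin_phase_def using total_pairing_emb_mult[OF assms(1) fps_coeffs_in_M_snoc[OF assms(2,3) entries_in_unit_vec[OF assms(4)]]]
    by (simp add: algebra_simps)
qed

lemma Psi_fps_pad_args_mult: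
  assumes "length hs = d - 1" "i \<le> n"
  shows "Psi_fps emb a n d i (pad_args hs) * Abs_fps y = of_nat (fact d) * M (\<lambda>q. (hs @ [unit_vec i y]) ! q)"
proof -
  have "M (\<lambda>q. (hs @ [unit_vec i y]) ! q)
      = multi_form (\<lambda>js. emb (a js)) n (Suc (d - 1)) ((\<lambda>q. hs ! q)(d - 1 := unit_vec i y))"
    using M_snoc[OF assms(1)] d_ge_2 by simp
  also have "\<dots> = (\<Sum>js\<in>idx n (d - 1). fps_const (emb (a (js @ [i]))) * (\<Prod>p<d - 1. Abs_fps ((hs ! p) (js ! p)))) * Abs_fps y"
    by (rule multi_form_unit_vec_last[OF assms(2)])
  finally have M: "M (\<lambda>q. (hs @ [unit_vec i y]) ! q)
      = (\<Sum>js\<in>idx n (d - 1). fps_const (emb (a (js @ [i]))) * (\<Prod>p<d - 1. Abs_fps ((hs ! p) (js ! p)))) * Abs_fps y" .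
  have "fps_const (emb (of_nat (fact d) * a js)) = of_nat (fact d) * fps_const (emb (a js))" for js
    using const_emb const_emb_of_nat[OF const_emb] by (simp add: const_emb_def flip: fps_of_nat)
  moreover have "(\<Prod>p<d - 1. Abs_fps (pad_args hs p (js ! p))) = (\<Prod>p<d - 1. Abs_fps ((hs ! p) (js ! p)))" for js
    by (intro prod.cong) (auto simp: pad_args_def)
  ultimately show ?thesis unfolding M Psi_fps_def by (simp add: sum_distrib_left mult.assoc)
qed

lemma lin_phase_eq_0_if_trivial:
  assumes "\<gamma> \<in> tduals emb V m" "set hs \<subseteq> tvecs P k' N" "length hs = d - 1"
    and triv: "\<And>y. y \<in> trunc P k \<Longrightarrow> \<psi> (lin_phase \<gamma> s hs (unit_vec i y)) = 1"
    and y: "y \<in> trunc P k"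
  shows "lin_phase \<gamma> s hs (unit_vec i y) = 0"
proof (rule eq_0_if_trivial_on_multiples[OF nontriv])
  fix c
  have "(\<lambda>l. emb c * y l) \<in> trunc P k"
    using y RR_space_emb_mult[OF const_emb] by (auto simp: trunc_def)
  then show "\<psi> (c * lin_phase \<gamma> s hs (unit_vec i y)) = 1"
    using triv lin_phase_scale_unit_vec[OF assms(1-3) y] by metis
qed

text \<open>The partial sums of the coefficients to be shown zero are pairings against the shifts
  \<open>t\<^sup>j y\<close> of \<open>y\<close>.\<close>

lemma pairing_Psi_fps_mult_eq_0:
  assumes \<gamma>: "\<gamma> \<in> tduals emb V m" and s: "s \<le> m" and hs: "length hs = d - 1" and i: "i \<le> n"
    and zero: "\<And>y. y \<in> trunc P (m - s) \<Longrightarrow> lin_phase \<gamma> s hs (unit_vec i y) = 0"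
    and y: "y \<in> trunc P (m - s)" and l: "l \<le> m - s"
  shows "pairing \<gamma> (fps_nth (Psi_fps emb a n d i (pad_args hs) * Abs_fps y)) l = 0"
proof (rule partial_sums_zero_imp_zero[OF _ l])
  fix t assume t: "t \<le> m - s"
  define Q where "Q = Psi_fps emb a n d i (pad_args hs) * Abs_fps y"
  define yt where "yt = (\<lambda>l. if t \<le> l \<and> l \<le> m - s then y (l - t) else 0)"
  have yt: "yt \<in> trunc P (m - s)" using y RR_space_zero by (auto simp: trunc_def yt_def)
  have "0 = total_pairing \<gamma> (m - s) (Psi_fps emb a n d i (pad_args hs) * Abs_fps yt)"
    using zero[OF yt] unfolding lin_phase_def Psi_fps_pad_args_mult[OF hs i]
    by (simp add: total_pairing_shift[OF \<gamma> RR_space_zero s])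
  also have "\<dots> = total_pairing \<gamma> (m - s) (fps_X ^ t * Q)"
  proof (rule total_pairing_cong)
    fix l assume "l \<le> m - s"
    then show "fps_nth (Psi_fps emb a n d i (pad_args hs) * Abs_fps yt) l = fps_nth (fps_X ^ t * Q) l"
      unfolding Q_def mult.left_commute[of "fps_X ^ t"]
      by (intro fps_mult_nth_cong) (auto simp: yt_def fps_X_power_mult_nth)
  qed
  also have "\<dots> = total_pairing \<gamma> (m - s - t) Q" by (rule total_pairing_shift[OF \<gamma> RR_space_zero t])
  finally show "(\<Sum>l\<le>m - s - t. pairing \<gamma> (fps_nth (Psi_fps emb a n d i (pad_args hs) * Abs_fps y)) l) = 0"
    by (simp add: total_pairing_def Q_def)
qed

lemma pad_args_in_N_set:
  assumes \<gamma>: "\<gamma> \<in> tduals emb V m" and s: "s \<le> m" and hs: "hs \<in> lists_of (tvecs P (m - s) (Suc n)) (d - 1)"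
    and triv: "\<And>i y. i \<le> n \<Longrightarrow> y \<in> trunc P (m - s) \<Longrightarrow> \<psi> (lin_phase \<gamma> s hs (unit_vec i y)) = 1"
  shows "pad_args hs \<in> N_set \<gamma> (m - s)"
proof -
  have len: "length hs = d - 1" and hs_in: "set hs \<subseteq> tvecs P (m - s) (Suc n)"
    using hs by (auto simp: lists_of_def)
  have "pairing \<gamma> (tmul (m - s) (Psi emb (m - s) a n d i (pad_args hs)) y) l = 0"
    if i: "i \<le> n" and y: "y \<in> trunc P (m - s)" and l: "l \<le> m - s" for i y l
  proof -
    have "pairing \<gamma> (tmul (m - s) (Psi emb (m - s) a n d i (pad_args hs)) y) l
        = pairing \<gamma> (fps_nth (Psi_fps emb a n d i (pad_args hs) * Abs_fps y)) l"
      using l by (intro pairing_cong) (auto simp: tmul_def fps_mult_nth atLeast0AtMost Psi_eq_fps intro!: sum.cong)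
    also have "\<dots> = 0"
      using lin_phase_eq_0_if_trivial[OF \<gamma> hs_in len triv[OF i]]
      by (intro pairing_Psi_fps_mult_eq_0[OF \<gamma> s len i _ y l])
    finally show ?thesis .
  qed
  then show ?thesis
    using hs_in len nth_mem[of _ hs] by (auto simp: N_set_def pad_args_def)
qed

lemma norm_sum_affine_lin_phase_le:
  assumes \<gamma>: "\<gamma> \<in> tduals emb V m" and s: "s \<le> m" and hs: "hs \<in> lists_of (tvecs P (m - s) (Suc n)) (d - 1)"
    and sub: "tvecs P (m - s) (Suc n) \<subseteq> tvecs P k (Suc n)"
    and f: "\<And>u. u \<in> tvecs P k (Suc n) \<Longrightarrow> f u = c + lin_phase \<gamma> s hs u"
  shows "cmod (\<Sum>u\<in>tvecs P k (Suc n). \<psi> (f u))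
    \<le> real (card (tvecs P k (Suc n))) * of_bool (pad_args hs \<in> N_set \<gamma> (m - s))"
proof -
  have hs_in: "set hs \<subseteq> tvecs P (m - s) (Suc n)" and len: "length hs = d - 1"
    using hs by (auto simp: lists_of_def)
  have "cmod (\<Sum>u\<in>tvecs P k (Suc n). \<psi> (f u))
      = (if \<forall>u\<in>tvecs P k (Suc n). \<psi> (lin_phase \<gamma> s hs u) = 1 then real (card (tvecs P k (Suc n))) else 0)"
    using f by (intro norm_sum_add_char_affine[OF add_char add_subgroup_tvecs_P finite_tvecs_P]
        lin_phase_add[OF \<gamma> hs_in len] entries_in_P)
  also have "\<dots> \<le> real (card (tvecs P k (Suc n))) * of_bool (pad_args hs \<in> N_set \<gamma> (m - s))"
  proof (cases "\<forall>u\<in>tvecs P k (Suc n). \<psi> (lin_phase \<gamma> s hs u) = 1")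
    case True
    then have "pad_args hs \<in> N_set \<gamma> (m - s)"
      using sub unit_vec_tvecs by (intro pad_args_in_N_set[OF \<gamma> s hs]) blast
    then show ?thesis using True by simp
  next
    case False
    then show ?thesis by (simp only: if_not_P[OF False]) simp
  qed
  finally show ?thesis .
qed

lemma G_fps_eq_insert_arg: "G_fps y x = of_nat d * M (insert_arg y 0 (\<lambda>_. x))"
proof -
  have "M (\<lambda>q. if q = p then y else x) = M (insert_arg y 0 (\<lambda>_. x))" if "p < d" for p
  proof -
    have "(\<lambda>q. if q = p then y else x) = insert_arg y p (\<lambda>_. x)" by (auto simp: insert_arg_def fun_eq_iff)
    then show ?thesis using perm_invariant_insert_arg[OF perm_invariant_M that] by simp
  qed
  then show ?thesis unfolding G_fps_def polar_def by simp
qed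

lemma G_fps_add: "G_fps (x + y) x0 = G_fps x x0 + G_fps y x0"
  unfolding G_fps_def by (rule polar_add[OF multilinear_M])

lemma of_nat_d_mult_fact: "(of_nat d :: 'K fps) * of_nat (fact (d - 1)) = of_nat (fact d)"
proof -
  have "fact d = d * fact (d - 1)" using d_ge_2 fact_reduce[of d, where 'a = nat] by simp
  then show ?thesis by (metis of_nat_mult)
qed

lemma iter_diff_G_fps:
  assumes "length ks + 1 = d - 1"
  shows "iter_diff ks (G_fps y) x = iter_diff ks (G_fps y) 0 + of_nat (fact d) * M (\<lambda>q. (y # ks @ [x]) ! q)"
proof -
  have "G_fps y = (\<lambda>x. of_nat d * M (insert_arg y 0 (\<lambda>_. x)))" by (simp add: G_fps_eq_insert_arg fun_eq_iff)
  then show ?thesis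
    using iter_diff_diagonal_affine[OF multilinear_insert_arg[OF multilinear_M] perm_invariant_insert_arg_0[OF perm_invariant_M] assms,
        of y x]
    by (simp add: iter_diff_mult_left insert_arg_0_nth algebra_simps flip: of_nat_d_mult_fact)
qed

lemma iter_diff_G_fps_top:
  assumes "length ks = d - 1"
  shows "iter_diff ks (G_fps y) x = of_nat (fact d) * M (\<lambda>q. (y # ks) ! q)"
proof -
  have "G_fps y = (\<lambda>x. of_nat d * M (insert_arg y 0 (\<lambda>_. x)))" by (simp add: G_fps_eq_insert_arg fun_eq_iff)
  then show ?thesis
    using iter_diff_diagonal[OF multilinear_insert_arg[OF multilinear_M] perm_invariant_insert_arg_0[OF perm_invariant_M] assms,
        of y x]
    by (simp add: iter_diff_mult_left insert_arg_0_nth algebra_simps flip: of_nat_d_mult_fact)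
qed

lemma iter_diff_F_fps:
  assumes "length ks + 1 = d"
  shows "iter_diff ks F_fps x = iter_diff ks F_fps 0 + of_nat (fact d) * M (\<lambda>q. (ks @ [x]) ! q)"
  unfolding F_fps_def by (rule iter_diff_diagonal_affine[OF multilinear_M perm_invariant_M assms])

lemma total_pairing_iter_diff:
  assumes "\<gamma> \<in> tduals emb V m" "set ks \<subseteq> tvecs P k N" "x \<in> tvecs P k N"
    "\<And>x. x \<in> tvecs P k N \<Longrightarrow> fps_coeffs_in V (G x)"
  shows "iter_diff ks (\<lambda>x. total_pairing \<gamma> m (G x)) x = total_pairing \<gamma> m (iter_diff ks G x)"
  by (rule iter_diff_hom_on[OF add_subgroup_tvecs_P assms(2) _ assms(3), where W = "{f. fps_coeffs_in V f}"])
     (use assms in \<open>auto intro: fps_coeffs_in_diff total_pairing_diff\<close>)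

lemma fps_coeffs_in_iter_diff:
  assumes "set ks \<subseteq> tvecs P k N" "x \<in> tvecs P k N" "\<And>x. x \<in> tvecs P k N \<Longrightarrow> fps_coeffs_in V (G x)"
  shows "fps_coeffs_in V (iter_diff ks G x)"
  using iter_diff_in[OF add_subgroup_tvecs_P assms(1) _ assms(2), where W = "{f. fps_coeffs_in V f}" and G = G] assms(3)
  by (auto intro: fps_coeffs_in_diff)

subsection \<open>The bound in terms of \<open>N\<^sup>(\<^sup>m\<^sup>)(\<beta>)\<close>\<close>

text \<open>The sum over \<open>x\<^sub>1\<close> is a complete character sum of a function linear in \<open>x\<^sub>1\<close>.\<close>

lemma norm_S_sum_le_beta:
  defines "X \<equiv> tvecs P m (Suc n)"
  shows "cmod (S_sum emb \<psi> D a n d m \<alpha> \<beta>) \<le> (\<Sum>y\<in>X. cmod (\<Sum>x\<in>X. \<psi> (total_pairing \<beta> m (G_fps y x))))"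
proof -
  have additive: "total_pairing \<beta> m (G_fps (y + y') x) = total_pairing \<beta> m (G_fps y x) + total_pairing \<beta> m (G_fps y' x)"
    if "x \<in> X" "y \<in> X" "y' \<in> X" for x y y'
    using that unfolding X_def G_fps_add by (intro total_pairing_add[OF \<beta>_dual] fps_coeffs_in_G_fps)
  have "cmod (S_sum emb \<psi> D a n d m \<alpha> \<beta>) \<le> (\<Sum>x\<in>{x \<in> X. glob_gen emb D n x}. cmod (\<Sum>y\<in>X. \<psi> (phase x y)))"
    unfolding S_sum_eq_phase X_def by (rule norm_sum)
  also have "\<dots> = (\<Sum>x\<in>{x \<in> X. glob_gen emb D n x}. cmod (\<Sum>y\<in>X. \<psi> (total_pairing \<beta> m (G_fps y x))))"
    by (simp add: phase_def add_char_add[OF add_char] norm_mult norm_add_char[OF add_char] flip: sum_distrib_left)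
  also have "\<dots> \<le> (\<Sum>x\<in>X. cmod (\<Sum>y\<in>X. \<psi> (total_pairing \<beta> m (G_fps y x))))"
    by (rule sum_mono2) (simp_all add: X_def finite_tvecs_P)
  also have "\<dots> \<le> (\<Sum>y\<in>X. cmod (\<Sum>x\<in>X. \<psi> (total_pairing \<beta> m (G_fps y x))))"
    unfolding X_def using additive[unfolded X_def]
    by (intro sum_norm_sum_add_char_swap[OF add_char add_subgroup_tvecs_P finite_tvecs_P]) auto
  finally show ?thesis .
qed

lemma iter_diff_beta_phase:
  defines "X \<equiv> tvecs P m (Suc n)"
  assumes y: "y \<in> X" and ks: "ks \<in> lists_of X (d - 2)"
  shows "\<exists>c. \<forall>x\<in>X. iter_diff ks (\<lambda>x. total_pairing \<beta> m (G_fps y x)) x = c + lin_phase \<beta> 0 (y # ks) x"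
proof (intro exI ballI)
  have ks_X: "set ks \<subseteq> X" and len: "length ks + 1 = d - 1" using ks d_ge_2 by (auto simp: lists_of_def)
  have yks: "set (y # ks) \<subseteq> X" "length (y # ks) = d - 1" using y ks_X len by auto
  have G: "fps_coeffs_in V (G_fps y x)" if "x \<in> X" for x
    using y that unfolding X_def by (rule fps_coeffs_in_G_fps)
  have G0: "fps_coeffs_in V (iter_diff ks (G_fps y) 0)"
    using ks_X G add_subgroup_zero[OF add_subgroup_tvecs_P] unfolding X_def
    by (intro fps_coeffs_in_iter_diff[where k = m and N = "Suc n"]) auto
  fix x assume x: "x \<in> X"
  have E: "fps_coeffs_in V (of_nat (fact d) * M (\<lambda>q. ((y # ks) @ [x]) ! q))"
    using fps_coeffs_in_M_snoc[OF yks[unfolded X_def] entries_in_P, of x m "Suc n" 0] x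
    unfolding X_def by simp
  have "iter_diff ks (\<lambda>x. total_pairing \<beta> m (G_fps y x)) x = total_pairing \<beta> m (iter_diff ks (G_fps y) x)"
    using ks_X x G unfolding X_def by (intro total_pairing_iter_diff[OF \<beta>_dual]) auto
  also have "iter_diff ks (G_fps y) x = iter_diff ks (G_fps y) 0 + of_nat (fact d) * M (\<lambda>q. ((y # ks) @ [x]) ! q)"
    using iter_diff_G_fps[OF len, of y x] by simp
  also have "total_pairing \<beta> m \<dots>
      = total_pairing \<beta> m (iter_diff ks (G_fps y) 0) + total_pairing \<beta> m (of_nat (fact d) * M (\<lambda>q. ((y # ks) @ [x]) ! q))"
    by (rule total_pairing_add[OF \<beta>_dual G0 E])
  finally show "iter_diff ks (\<lambda>x. total_pairing \<beta> m (G_fps y x)) x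
      = total_pairing \<beta> m (iter_diff ks (G_fps y) 0) + lin_phase \<beta> 0 (y # ks) x"
    by (simp add: lin_phase_def)
qed

lemma norm_char_diffs_beta_le:
  defines "X \<equiv> tvecs P m (Suc n)"
  assumes y: "y \<in> X" and ks: "ks \<in> lists_of X (d - 2)"
  shows "cmod (\<Sum>x\<in>X. char_diffs ks (\<lambda>x. \<psi> (total_pairing \<beta> m (G_fps y x))) x)
    \<le> real (card X) * of_bool (pad_args (y # ks) \<in> N_set \<beta> m)"
proof -
  obtain c where "\<forall>x\<in>X. iter_diff ks (\<lambda>x. total_pairing \<beta> m (G_fps y x)) x = c + lin_phase \<beta> 0 (y # ks) x"
    using iter_diff_beta_phase[OF y[unfolded X_def] ks[unfolded X_def]] unfolding X_def by blast
  moreover have "y # ks \<in> lists_of (tvecs P (m - 0) (Suc n)) (d - 1)"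
    using y ks d_ge_2 unfolding X_def by (auto simp: lists_of_def)
  ultimately show ?thesis
    unfolding char_diffs_add_char[OF add_char] X_def
    using norm_sum_affine_lin_phase_le[OF \<beta>_dual, of 0 "y # ks" m] by simp
qed

theorem beta_bound:
  defines "X \<equiv> tvecs P m (Suc n)"
  shows "cmod (S_sum emb \<psi> D a n d m \<alpha> \<beta>) ^ 2 ^ (d - 2) * real (card X) ^ (d - 1)
    \<le> real (card X) ^ (2 * 2 ^ (d - 2)) * real (card (N_set \<beta> m))"
proof -
  define t where "t = real (card X)"
  define N :: nat where "N = 2 ^ (d - 2)"
  have t: "t \<ge> 0" by (simp add: t_def)
  have "cmod (S_sum emb \<psi> D a n d m \<alpha> \<beta>) ^ N * t * t ^ (d - 2)
      \<le> (\<Sum>y\<in>X. cmod (\<Sum>x\<in>X. \<psi> (total_pairing \<beta> m (G_fps y x)))) ^ N * t * t ^ (d - 2)"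
    using t unfolding X_def by (intro mult_right_mono power_mono norm_S_sum_le_beta) simp_all
  also have "\<dots> \<le> t ^ N * t ^ N * (\<Sum>y\<in>X. \<Sum>ks\<in>lists_of X (d - 2). of_bool (pad_args (y # ks) \<in> N_set \<beta> m))"
    unfolding t_def N_def X_def
    by (rule weyl_differencing_sum[OF add_subgroup_tvecs_P finite_tvecs_P add_subgroup_tvecs_P order_refl
          norm_char_diffs_beta_le[unfolded X_def]])
  also have "\<dots> \<le> t ^ N * t ^ N * real (card (N_set \<beta> m))"
  proof -
    have "d - 1 = Suc (d - 2)" using d_ge_2 by simp
    then have "(\<Sum>y\<in>X. \<Sum>ks\<in>lists_of X (d - 2). of_bool (pad_args (y # ks) \<in> N_set \<beta> m))
        = (\<Sum>hs\<in>lists_of X (d - 1). of_bool (pad_args hs \<in> N_set \<beta> m))"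
      by (simp only: sum_lists_of_Suc)
    also have "\<dots> \<le> real (card (N_set \<beta> m))"
      unfolding X_def by (rule sum_of_bool_pad_args_le[OF finite_tvecs_P])
    finally show ?thesis using t by (intro mult_left_mono) simp_all
  qed
  finally have "cmod (S_sum emb \<psi> D a n d m \<alpha> \<beta>) ^ N * (t * t ^ (d - 2)) \<le> t ^ (2 * N) * real (card (N_set \<beta> m))"
    by (simp only: mult_2 power_add mult.assoc)
  moreover have "d - 1 = Suc (d - 2)" using d_ge_2 by simp
  ultimately show ?thesis by (simp only: t_def N_def power_Suc)
qed

end

lemma mult_le_min: "x \<le> c * a \<Longrightarrow> x \<le> c * b \<Longrightarrow> x \<le> c * min a (b::real)"
  by (simp add: min_def)

section \<open>The bound in terms of \<open>N\<^sup>(\<^sup>m\<^sup>-\<^sup>m\<^sup>'\<^sup>)(\<alpha>)\<close>\<close>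

locale split_setting = exp_sum_setting +
  fixes s :: nat
  assumes s_ge_1: "1 \<le> s" and s_le_m: "s \<le> m" and s_half: "m + 1 \<le> 2 * s"
begin

abbreviation "X \<equiv> tvecs P m (Suc n)"
abbreviation "U \<equiv> tvecs P (s - 1) (Suc n)"
abbreviation "H \<equiv> tvecs P (m - s) (Suc n)"

lemma H_subset_U: "H \<subseteq> U"
  by (rule tvecs_mono[OF RR_space_zero]) (use s_half in simp)

lemma U_subset_X: "U \<subseteq> X"
  by (rule tvecs_mono[OF RR_space_zero]) (use s_le_m in simp)

lemma shift_vec_in_X: "h \<in> H \<Longrightarrow> shift_vec s h \<in> X"
  using s_le_m by (auto simp: mem_tvecs_iff[OF RR_space_zero] shift_vec_def RR_space_zero)

lemma card_U_mult_card_H: "card U * card H = card X"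
proof -
  have "(s - 1 + 1) * Suc n + (m - s + 1) * Suc n = (m + 1) * Suc n"
    using s_ge_1 s_le_m by (simp flip: add_mult_distrib)
  then show ?thesis by (simp only: card_tvecs_P power_add[symmetric])
qed

definition phase_lin where
  "phase_lin u x1 h = total_pairing \<alpha> m (fps_X ^ s * G_fps h u)
     + total_pairing \<beta> m (fps_X ^ s * (of_nat d * polar (d - 1) (\<lambda>w. M (insert_arg x1 0 w)) u h))"

lemma F_fps_shift_expansion:
  "\<exists>R. F_fps (u + shift_vec s h) = F_fps u + fps_X ^ s * G_fps h u + fps_X ^ s * fps_X ^ s * R"
  unfolding F_fps_def G_fps_def by (rule diagonal_expansion[OF multilinear_M]) (rule multi_form_shift_vec)

lemma G_fps_shift_expansion:
  "\<exists>R. G_fps x1 (u + shift_vec s h)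
    = G_fps x1 u + fps_X ^ s * (of_nat d * polar (d - 1) (\<lambda>w. M (insert_arg x1 0 w)) u h) + fps_X ^ s * fps_X ^ s * R"
proof -
  obtain R where R: "M (insert_arg x1 0 (\<lambda>_. u + shift_vec s h))
      = M (insert_arg x1 0 (\<lambda>_. u)) + fps_X ^ s * polar (d - 1) (\<lambda>w. M (insert_arg x1 0 w)) u h + fps_X ^ s * fps_X ^ s * R"
  proof (atomize_elim, rule diagonal_expansion[OF multilinear_insert_arg[OF multilinear_M]])
    fix z p w assume "p < d - 1"
    then show "M (insert_arg x1 0 (z(p := shift_vec s w))) = fps_X ^ s * M (insert_arg x1 0 (z(p := w)))"
      unfolding insert_arg_0_upd by (intro multi_form_shift_vec) simp
  qed
  show ?thesis
    by (rule exI[of _ "of_nat d * R"]) (simp add: G_fps_eq_insert_arg R algebra_simps)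
qed

lemma fps_coeffs_in_phase_lin_parts:
  assumes "entries_in P u" "entries_in P x1" "entries_in P h"
  shows "fps_coeffs_in V (fps_X ^ s * G_fps h u)"
    "fps_coeffs_in V (fps_X ^ s * (of_nat d * polar (d - 1) (\<lambda>w. M (insert_arg x1 0 w)) u h))"
  using assms unfolding G_fps_def polar_def
  by (intro fps_coeffs_in_X_power_mult fps_coeffs_in_of_nat_mult fps_coeffs_in_sum fps_coeffs_in_M;
      auto simp: insert_arg_def)+

text \<open>Since \<open>2 s > m\<close>, the shift \<open>u \<mapsto> u + t\<^sup>s h\<close> changes the phase by a term linear in \<open>h\<close>.\<close>

lemma phase_shift:
  assumes u: "entries_in P u" and h: "entries_in P h" and x1: "entries_in P x1"
  shows "phase (u + shift_vec s h) x1 = phase u x1 + phase_lin u x1 h"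
proof -
  obtain R R' where
    R: "F_fps (u + shift_vec s h) = F_fps u + fps_X ^ s * G_fps h u + fps_X ^ s * fps_X ^ s * R" and
    R': "G_fps x1 (u + shift_vec s h)
      = G_fps x1 u + fps_X ^ s * (of_nat d * polar (d - 1) (\<lambda>w. M (insert_arg x1 0 w)) u h) + fps_X ^ s * fps_X ^ s * R'"
    using F_fps_shift_expansion G_fps_shift_expansion by blast
  have F: "fps_coeffs_in V (F_fps u)" unfolding F_fps_def by (rule fps_coeffs_in_M) (use u in simp)
  have G: "fps_coeffs_in V (G_fps x1 u)"
    unfolding G_fps_def polar_def by (intro fps_coeffs_in_sum fps_coeffs_in_M) (use u x1 in auto)
  have "total_pairing \<alpha> m (F_fps (u + shift_vec s h)) = total_pairing \<alpha> m (F_fps u + fps_X ^ s * G_fps h u)"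
    "total_pairing \<beta> m (G_fps x1 (u + shift_vec s h))
      = total_pairing \<beta> m (G_fps x1 u + fps_X ^ s * (of_nat d * polar (d - 1) (\<lambda>w. M (insert_arg x1 0 w)) u h))"
    unfolding R R' by (intro total_pairing_cong; simp add: nth_fps_X_power_mult_X_power_mult[OF s_half])+
  then show ?thesis
    unfolding phase_def phase_lin_def
    using total_pairing_add[OF \<alpha>_dual F fps_coeffs_in_phase_lin_parts(1)[OF u x1 h]]
      total_pairing_add[OF \<beta>_dual G fps_coeffs_in_phase_lin_parts(2)[OF u x1 h]]
    by simp
qed

lemma phase_lin_add:
  assumes "entries_in P u" "entries_in P x1" "entries_in P h" "entries_in P h'"
  shows "phase_lin u x1 (h + h') = phase_lin u x1 h + phase_lin u x1 h'"
  using fps_coeffs_in_phase_lin_parts[OF assms(1,2,3)] fps_coeffs_in_phase_lin_parts[OF assms(1,2,4)]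
  unfolding phase_lin_def G_fps_add polar_add[OF multilinear_insert_arg[OF multilinear_M]]
  by (simp add: algebra_simps total_pairing_add[OF \<alpha>_dual] total_pairing_add[OF \<beta>_dual])

lemma S_sum_eq_split:
  "S_sum emb \<psi> D a n d m \<alpha> \<beta>
    = (\<Sum>x1\<in>X. \<Sum>u\<in>U. if glob_gen emb D n u then \<psi> (phase u x1) * (\<Sum>h\<in>H. \<psi> (phase_lin u x1 h)) else 0)"
proof -
  have "S_sum emb \<psi> D a n d m \<alpha> \<beta> = (\<Sum>x1\<in>X. \<Sum>x0\<in>{x \<in> X. glob_gen emb D n x}. \<psi> (phase x0 x1))"
    unfolding S_sum_eq_phase by (rule sum.swap)
  also have "\<dots> = (\<Sum>x1\<in>X. \<Sum>x0\<in>X. if glob_gen emb D n x0 then \<psi> (phase x0 x1) else 0)"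
    by (simp add: sum.inter_filter[OF finite_tvecs_P])
  also have "\<dots> = (\<Sum>x1\<in>X. \<Sum>u\<in>U. \<Sum>h\<in>H.
      if glob_gen emb D n (u + shift_vec s h) then \<psi> (phase (u + shift_vec s h) x1) else 0)"
    by (simp only: sum_tvecs_split[OF RR_space_zero s_ge_1 s_le_m])
  also have "\<dots> = (\<Sum>x1\<in>X. \<Sum>u\<in>U. if glob_gen emb D n u then \<psi> (phase u x1) * (\<Sum>h\<in>H. \<psi> (phase_lin u x1 h)) else 0)"
    by (intro sum.cong refl)
      (simp add: glob_gen_add_shift_vec[OF s_ge_1] phase_shift entries_in_P add_char_add[OF add_char] sum_distrib_left)
  finally show ?thesis .
qed

text \<open>The sum over \<open>h\<close> is a complete character sum of a function linear in \<open>h\<close>.\<close>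

lemma norm_S_sum_le_alpha:
  "cmod (S_sum emb \<psi> D a n d m \<alpha> \<beta>) \<le> (\<Sum>(x1, h)\<in>X \<times> H. cmod (\<Sum>u\<in>U. \<psi> (phase_lin u x1 h)))"
proof -
  have "cmod (S_sum emb \<psi> D a n d m \<alpha> \<beta>) \<le> (\<Sum>x1\<in>X. \<Sum>u\<in>U. cmod (\<Sum>h\<in>H. \<psi> (phase_lin u x1 h)))"
    unfolding S_sum_eq_split
    by (rule order_trans[OF norm_sum sum_mono[OF order_trans[OF norm_sum sum_mono]]])
      (simp add: norm_mult norm_add_char[OF add_char])
  also have "\<dots> \<le> (\<Sum>x1\<in>X. \<Sum>h\<in>H. cmod (\<Sum>u\<in>U. \<psi> (phase_lin u x1 h)))"
  proof (rule sum_mono)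
    fix x1 assume "x1 \<in> X"
    then show "(\<Sum>u\<in>U. cmod (\<Sum>h\<in>H. \<psi> (phase_lin u x1 h))) \<le> (\<Sum>h\<in>H. cmod (\<Sum>u\<in>U. \<psi> (phase_lin u x1 h)))"
      by (intro sum_norm_sum_add_char_swap[OF add_char add_subgroup_tvecs_P finite_tvecs_P] phase_lin_add entries_in_P)
  qed
  finally show ?thesis by (simp add: sum.cartesian_product)
qed

lemma M_shift_vec_Cons:
  "M (\<lambda>q. ((shift_vec s h # ks) @ [u]) ! q) = fps_X ^ s * M (\<lambda>q. ((h # ks) @ [u]) ! q)"
proof -
  have "(\<lambda>q. ((shift_vec s h # ks) @ [u]) ! q) = (\<lambda>q. ((h # ks) @ [u]) ! q)(0 := shift_vec s h)"
    "(\<lambda>q. ((h # ks) @ [u]) ! q)(0 := h) = (\<lambda>q. ((h # ks) @ [u]) ! q)"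
    by (auto simp: fun_eq_iff nth_Cons split: nat.split)
  then show ?thesis
    using multi_form_shift_vec[of 0 d "\<lambda>js. emb (a js)" n "\<lambda>q. ((h # ks) @ [u]) ! q" s h] d_ge_2
    by (simp only:)
qed

text \<open>After the \<open>d - 2\<close> differences in \<open>ks\<close>, together with the shift by \<open>t\<^sup>s h\<close> already in
  \<open>phase_lin\<close>, the phase has been differenced \<open>d - 1\<close> times: the \<open>\<beta>\<close>-part is constant and the
  \<open>\<alpha>\<close>-part is affine.\<close>

lemma iter_diff_phase_lin:
  assumes x1: "x1 \<in> X" and h: "h \<in> H" and ks: "ks \<in> lists_of H (d - 2)"
  shows "\<exists>c. \<forall>u\<in>U. iter_diff ks (\<lambda>u. phase_lin u x1 h) u = c + lin_phase \<alpha> s (h # ks) u"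
proof (intro exI ballI)
  define ks' where "ks' = shift_vec s h # ks"
  have ks_H: "set ks \<subseteq> H" and len: "length ks' + 1 = d" using ks d_ge_2 by (auto simp: lists_of_def ks'_def)
  have ks'_X: "set ks' \<subseteq> X" using ks_H H_subset_U U_subset_X shift_vec_in_X[OF h] by (auto simp: ks'_def)
  have hks: "set (h # ks) \<subseteq> X" "length (h # ks) = d - 1"
    using h ks_H H_subset_U U_subset_X len by (auto simp: ks'_def)
  fix u assume u: "u \<in> U"
  have F: "fps_coeffs_in V (F_fps x)" and G: "fps_coeffs_in V (G_fps x1 x)" if "x \<in> X" for x
    using that x1 by (auto intro: fps_coeffs_in_F_fps fps_coeffs_in_G_fps)
  have F0: "fps_coeffs_in V (iter_diff ks' F_fps 0)"
    using ks'_X F add_subgroup_zero[OF add_subgroup_tvecs_P] by (intro fps_coeffs_in_iter_diff[where k = m]) auto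
  have "iter_diff ks (\<lambda>u. phase_lin u x1 h) u = iter_diff ks (\<lambda>u. phase (u + shift_vec s h) x1 - phase u x1) u"
    using ks_H H_subset_U u h x1
    by (intro iter_diff_cong_on[OF add_subgroup_tvecs_P]) (auto simp: phase_shift entries_in_P)
  also have "\<dots> = iter_diff ks' (\<lambda>u. total_pairing \<alpha> m (F_fps u)) u + iter_diff ks' (\<lambda>u. total_pairing \<beta> m (G_fps x1 u)) u"
  proof -
    have "(\<lambda>u. phase (u + shift_vec s h) x1 - phase u x1)
        = (\<lambda>u. (total_pairing \<alpha> m (F_fps (u + shift_vec s h)) - total_pairing \<alpha> m (F_fps u))
             + (total_pairing \<beta> m (G_fps x1 (u + shift_vec s h)) - total_pairing \<beta> m (G_fps x1 u)))"
      by (simp add: phase_def fun_eq_iff algebra_simps)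
    then show ?thesis by (simp add: ks'_def iter_diff_add)
  qed
  also have "\<dots> = total_pairing \<alpha> m (iter_diff ks' F_fps u) + total_pairing \<beta> m (iter_diff ks' (G_fps x1) u)"
    using ks'_X u U_subset_X F G by (simp add: subset_iff total_pairing_iter_diff[OF \<alpha>_dual] total_pairing_iter_diff[OF \<beta>_dual])
  also have "iter_diff ks' F_fps u = iter_diff ks' F_fps 0 + fps_X ^ s * (of_nat (fact d) * M (\<lambda>q. ((h # ks) @ [u]) ! q))"
    using iter_diff_F_fps[OF len, of u] unfolding ks'_def M_shift_vec_Cons by (simp add: mult.left_commute)
  also have "iter_diff ks' (G_fps x1) u = of_nat (fact d) * M (\<lambda>q. (x1 # ks') ! q)"
    by (rule iter_diff_G_fps_top) (use len in simp)
  also have "total_pairing \<alpha> m (iter_diff ks' F_fps 0 + fps_X ^ s * (of_nat (fact d) * M (\<lambda>q. ((h # ks) @ [u]) ! q)))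
      = total_pairing \<alpha> m (iter_diff ks' F_fps 0) + lin_phase \<alpha> s (h # ks) u"
    unfolding lin_phase_def using u U_subset_X
    by (intro total_pairing_add[OF \<alpha>_dual F0 fps_coeffs_in_M_snoc[OF hks entries_in_P]]) auto
  finally show "iter_diff ks (\<lambda>u. phase_lin u x1 h) u
      = total_pairing \<alpha> m (iter_diff ks' F_fps 0) + total_pairing \<beta> m (of_nat (fact d) * M (\<lambda>q. (x1 # ks') ! q))
        + lin_phase \<alpha> s (h # ks) u"
    by (simp only: ac_simps)
qed

lemma norm_char_diffs_alpha_le:
  assumes x1: "x1 \<in> X" and h: "h \<in> H" and ks: "ks \<in> lists_of H (d - 2)"
  shows "cmod (\<Sum>u\<in>U. char_diffs ks (\<lambda>u. \<psi> (phase_lin u x1 h)) u)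
    \<le> real (card U) * of_bool (pad_args (h # ks) \<in> N_set \<alpha> (m - s))"
proof -
  obtain c where "\<forall>u\<in>U. iter_diff ks (\<lambda>u. phase_lin u x1 h) u = c + lin_phase \<alpha> s (h # ks) u"
    using iter_diff_phase_lin[OF assms] by blast
  moreover have "h # ks \<in> lists_of H (d - 1)" using h ks d_ge_2 by (auto simp: lists_of_def)
  ultimately show ?thesis
    unfolding char_diffs_add_char[OF add_char]
    by (intro norm_sum_affine_lin_phase_le[OF \<alpha>_dual s_le_m _ H_subset_U]) auto
qed

theorem alpha_bound:
  "cmod (S_sum emb \<psi> D a n d m \<alpha> \<beta>) ^ 2 ^ (d - 2) * real (card H) ^ (d - 1)
    \<le> real (card X) ^ (2 * 2 ^ (d - 2)) * real (card (N_set \<alpha> (m - s)))"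
proof -
  define N :: nat where "N = 2 ^ (d - 2)"
  define t where "t = real (card X)"
  define u where "u = real (card U)"
  define v where "v = real (card H)"
  have t: "t > 0" using card_add_subgroup_pos[OF add_subgroup_tvecs_P finite_tvecs_P] by (simp add: t_def)
  have tuv: "u * v = t" using card_U_mult_card_H by (simp add: t_def u_def v_def flip: of_nat_mult)
  have cXH: "real (card (X \<times> H)) = t * v" by (simp add: card_cartesian_product t_def v_def)
  have count: "(\<Sum>(x1, h)\<in>X \<times> H. \<Sum>ks\<in>lists_of H (d - 2). of_bool (pad_args (h # ks) \<in> N_set \<alpha> (m - s)))
      \<le> t * real (card (N_set \<alpha> (m - s)))"
  proof -
    have "d - 1 = Suc (d - 2)" using d_ge_2 by simp
    then have "(\<Sum>h\<in>H. \<Sum>ks\<in>lists_of H (d - 2). of_bool (pad_args (h # ks) \<in> N_set \<alpha> (m - s)))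
        = (\<Sum>hs\<in>lists_of H (d - 1). of_bool (pad_args hs \<in> N_set \<alpha> (m - s)))"
      by (simp only: sum_lists_of_Suc)
    also have "\<dots> \<le> real (card (N_set \<alpha> (m - s)))" by (rule sum_of_bool_pad_args_le[OF finite_tvecs_P])
    finally show ?thesis
      by (simp add: t_def mult_left_mono flip: sum.cartesian_product)
  qed
  have "cmod (S_sum emb \<psi> D a n d m \<alpha> \<beta>) ^ N * real (card (X \<times> H)) * v ^ (d - 2)
      \<le> (\<Sum>(x1, h)\<in>X \<times> H. cmod (\<Sum>u\<in>U. \<psi> (phase_lin u x1 h))) ^ N * real (card (X \<times> H)) * v ^ (d - 2)"
    by (intro mult_right_mono power_mono norm_S_sum_le_alpha) (simp_all add: v_def)
  also have "\<dots> \<le> real (card (X \<times> H)) ^ N * u ^ N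
      * (\<Sum>(x1, h)\<in>X \<times> H. \<Sum>ks\<in>lists_of H (d - 2). of_bool (pad_args (h # ks) \<in> N_set \<alpha> (m - s)))"
    unfolding N_def u_def v_def split_beta
    by (rule weyl_differencing_sum[OF add_subgroup_tvecs_P finite_tvecs_P add_subgroup_tvecs_P H_subset_U])
      (rule norm_char_diffs_alpha_le; auto simp: mem_Times_iff)
  also have "\<dots> \<le> (t * v) ^ N * u ^ N * (t * real (card (N_set \<alpha> (m - s))))"
    using count unfolding cXH by (intro mult_left_mono) (simp_all add: t_def u_def v_def)
  also have "\<dots> = t * (t ^ (2 * N) * real (card (N_set \<alpha> (m - s))))"
    by (simp add: mult_2 power_add power_mult_distrib flip: tuv)
  finally have "t * (cmod (S_sum emb \<psi> D a n d m \<alpha> \<beta>) ^ N * (v * v ^ (d - 2))) \<le> t * (t ^ (2 * N) * real (card (N_set \<alpha> (m - s))))"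
    by (simp only: cXH mult_ac)
  then have "cmod (S_sum emb \<psi> D a n d m \<alpha> \<beta>) ^ N * (v * v ^ (d - 2)) \<le> t ^ (2 * N) * real (card (N_set \<alpha> (m - s)))"
    using t by simp
  moreover have "d - 1 = Suc (d - 2)" using d_ge_2 by simp
  ultimately show ?thesis by (simp only: N_def t_def v_def power_Suc)
qed

theorem norm_S_sum_pow_le:
  "cmod (S_sum emb \<psi> D a n d m \<alpha> \<beta>) ^ 2 ^ (d - 2)
    \<le> real (card (tvecs P m (2 * (n + 1)))) ^ 2 ^ (d - 2) / real (card (tvecs P (m - s) (n + 1))) ^ (d - 1)
       * min (real (N_count emb D a n d (m - s) \<alpha>))
             (real (N_count emb D a n d m \<beta>) / real (card (tvecs P (s - 1) (n + 1))) ^ (d - 1))"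
proof -
  define N :: nat where "N = 2 ^ (d - 2)"
  define t where "t = real (card X)"
  define u where "u = real (card U)"
  define v where "v = real (card H)"
  have pos: "u > 0" "v > 0"
    using card_add_subgroup_pos[OF add_subgroup_tvecs_P finite_tvecs_P] by (simp_all add: u_def v_def)
  have tuv: "t = u * v" using card_U_mult_card_H by (simp add: t_def u_def v_def flip: of_nat_mult)
  have t2: "real (card (tvecs P m (2 * (n + 1)))) = t ^ 2"
  proof -
    have "(m + 1) * (2 * (n + 1)) = ((m + 1) * Suc n) * 2" by simp
    then show ?thesis by (simp only: t_def card_tvecs_P power_mult of_nat_power)
  qed
  define S where "S = cmod (S_sum emb \<psi> D a n d m \<alpha> \<beta>) ^ N"
  have A: "S * v ^ (d - 1) \<le> t ^ (2 * N) * real (N_count emb D a n d (m - s) \<alpha>)"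
    using alpha_bound by (simp add: S_def N_def t_def v_def N_count_eq_card_N_set)
  have B: "S * (u ^ (d - 1) * v ^ (d - 1)) \<le> t ^ (2 * N) * real (N_count emb D a n d m \<beta>)"
    using beta_bound by (simp add: S_def N_def N_count_eq_card_N_set flip: t_def tuv power_mult_distrib)
  have uv: "0 < u ^ (d - 1)" "0 < v ^ (d - 1)" using pos by simp_all
  have "S \<le> t ^ (2 * N) / v ^ (d - 1) * real (N_count emb D a n d (m - s) \<alpha>)"
    using A uv by (simp add: field_simps)
  moreover have "S \<le> t ^ (2 * N) / v ^ (d - 1) * (real (N_count emb D a n d m \<beta>) / u ^ (d - 1))"
    using B uv by (simp add: field_simps)
  ultimately have "S \<le> t ^ (2 * N) / v ^ (d - 1)
      * min (real (N_count emb D a n d (m - s) \<alpha>)) (real (N_count emb D a n d m \<beta>) / u ^ (d - 1))"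
    using mult_le_min[of S "t ^ (2 * N) / v ^ (d - 1)"] by blast
  moreover have "real (card (tvecs P m (2 * Suc n))) ^ N = t ^ (2 * N)"
    using t2 by (simp add: power_mult)
  ultimately show ?thesis by (simp only: S_def N_def u_def v_def Suc_eq_plus1[symmetric])

qed

end

lemma ceiling_half_bounds:
  assumes "1 \<le> m"
  defines "m' \<equiv> nat \<lceil>(real m + 1) / 2\<rceil>"
  shows "1 \<le> m'" "m' \<le> m" "m + 1 \<le> 2 * m'"
proof -
  have "(real m + 1) / 2 \<le> real_of_int \<lceil>(real m + 1) / 2\<rceil>" "\<lceil>(real m + 1) / 2\<rceil> \<le> int m"
    "1 \<le> \<lceil>(real m + 1) / 2\<rceil>"
    using assms(1) by (simp_all add: ceiling_le_iff le_ceiling_iff)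
  moreover from mult_left_mono[OF this(1), of 2]
  have "real m + 1 \<le> 2 * real_of_int \<lceil>(real m + 1) / 2\<rceil>" by simp
  then have "int m + 1 \<le> 2 * \<lceil>(real m + 1) / 2\<rceil>" by linarith
  ultimately show "1 \<le> m'" "m' \<le> m" "m + 1 \<le> 2 * m'" unfolding m'_def by linarith+
qed

lemma S_sum_eq_0_if_degenerate:
  assumes "infinite (RR_space emb D) \<or> (\<forall>x. \<psi> x = 0)"
  shows "S_sum emb \<psi> D a n d m \<alpha> \<beta> = 0"
proof (cases "infinite (RR_space emb D)")
  case True
  then have "infinite (tvecs (RR_space emb D) m (Suc n))" by (rule infinite_tvecs[OF _ RR_space_zero])
  then show ?thesis by (simp add: S_sum_def)
next
  case False
  then show ?thesis using assms by (simp add: S_sum_def psi_m_def)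
qed

theorem lemma5p3:
  fixes emb :: "'k::{finite,field} \<Rightarrow> 'K::field"
    and \<psi> :: "'k \<Rightarrow> complex"
    and D :: "('K \<Rightarrow> int) \<Rightarrow> int"
    and a :: "nat list \<Rightarrow> 'k"
    and n d m :: nat
    and \<alpha> \<beta> :: "nat \<Rightarrow> 'K \<Rightarrow> 'k"
  assumes "function_field emb"
    and "nontriv_add_char \<psi>"
    and "divisor emb D"
    and "div_deg emb D \<ge> 2 * genus emb - 1"
    and "d \<ge> 2"
    and "sym_coeffs a"
    and "m \<ge> 1"
    and "\<alpha> \<in> tduals emb (RR_space emb (div_scale d D)) m"
    and "\<beta> \<in> tduals emb (RR_space emb (div_scale d D)) m"
  shows "let m' = nat \<lceil>(real m + 1) / 2\<rceil>; P = RR_space emb D in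
    cmod (S_sum emb \<psi> D a n d m \<alpha> \<beta>) ^ (2 ^ (d - 2))
    \<le> real (card (tvecs P m (2 * (n + 1)))) ^ (2 ^ (d - 2))
       / real (card (tvecs P (m - m') (n + 1))) ^ (d - 1)
       * min (real (N_count emb D a n d (m - m') \<alpha>))
             (real (N_count emb D a n d m \<beta>) / real (card (tvecs P (m' - 1) (n + 1))) ^ (d - 1))"
proof -
  define m' where "m' = nat \<lceil>(real m + 1) / 2\<rceil>"
  have m': "1 \<le> m'" "m' \<le> m" "m + 1 \<le> 2 * m'"
    using ceiling_half_bounds[OF assms(7)] unfolding m'_def by auto
  show ?thesis
  proof (cases "finite (RR_space emb D) \<and> \<not> (\<forall>x. \<psi> x = 0)")
    case True
    then interpret split_setting emb \<psi> D a n d m \<alpha> \<beta> m'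
      using nontriv_add_char_cases[OF assms(2)] assms m' by unfold_locales (auto simp: function_field_def)
    show ?thesis unfolding Let_def m'_def[symmetric] by (rule norm_S_sum_pow_le)
  next
    case False
    then have "S_sum emb \<psi> D a n d m \<alpha> \<beta> = 0" by (intro S_sum_eq_0_if_degenerate) auto
    then show ?thesis by (simp add: Let_def power_0_left)
  qed
qed

end
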